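(* Let $k = 137006962414679910 = 2 \cdot 3 \cdot 5 \cdot 7 \cdot 23 \cdot 31 \cdot 37 \cdot 43 \cdot 83 \cdot 109 \cdot 151 \cdot 421$. The following 10 points are rational points on the elliptic curve \[ y^2 = x^3 + 4692726937524378378756566939402025 \] (a minimal Weierstrass model of $E'_k$) and are linearly independent in its Mordell–Weil group: $(-135797482140, 46781315964225555)$, $(-150436201545, 35891470127810220)$, $(-42200591214, 67952721291406041)$, $(2327642247924, 3551854243978575507)$, $(5504535148140, 12914782107290941395)$, $(140506152430, 86409469562070095)$, $(397507563420, 259814927561209005)$, $(7162660587075, 19169656506442936830)$, $(73148794740, 71303068454026605)$, $(-102758626586, 60063833881519937)$. Consequently $E_k: x^3+y^3=k$ has rank at least $10$ over $\mathbb{Q}$. *)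

theory Defs
  imports Complex_Main
begin

datatype ec_pt = Inf | Aff rat rat

definition on_curve :: "rat \<Rightarrow> rat \<Rightarrow> ec_pt \<Rightarrow> bool" where
  "on_curve a b P = (case P of Inf \<Rightarrow> True | Aff x y \<Rightarrow> y^2 = x^3 + a*x + b)"

fun ec_add :: "rat \<Rightarrow> rat \<Rightarrow> ec_pt \<Rightarrow> ec_pt \<Rightarrow> ec_pt" where
  "ec_add a b Inf Q = Q"
| "ec_add a b P Inf = P"
| "ec_add a b (Aff x1 y1) (Aff x2 y2) =
     (if x1 = x2 \<and> y1 = - y2 then Inf
      else let l = (if x1 = x2 then (3 * x1^2 + a) / (2 * y1) else (y2 - y1) / (x2 - x1));
               x3 = l^2 - x1 - x2
           in Aff x3 (l * (x1 - x3) - y1))"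

fun ec_neg :: "ec_pt \<Rightarrow> ec_pt" where
  "ec_neg Inf = Inf"
| "ec_neg (Aff x y) = Aff x (- y)"

fun ec_nmul :: "rat \<Rightarrow> rat \<Rightarrow> nat \<Rightarrow> ec_pt \<Rightarrow> ec_pt" where
  "ec_nmul a b 0 P = Inf"
| "ec_nmul a b (Suc n) P = ec_add a b P (ec_nmul a b n P)"

definition ec_smul :: "rat \<Rightarrow> rat \<Rightarrow> int \<Rightarrow> ec_pt \<Rightarrow> ec_pt" where
  "ec_smul a b n P = (if n \<ge> 0 then ec_nmul a b (nat n) P else ec_neg (ec_nmul a b (nat (- n)) P))"

definition ec_sum :: "rat \<Rightarrow> rat \<Rightarrow> ec_pt list \<Rightarrow> ec_pt" where
  "ec_sum a b Ps = foldr (ec_add a b) Ps Inf"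

definition ec_lin_indep :: "rat \<Rightarrow> rat \<Rightarrow> ec_pt list \<Rightarrow> bool" where
  "ec_lin_indep a b Ps =
     (\<forall>ns :: int list. length ns = length Ps \<longrightarrow>
        ec_sum a b (map2 (ec_smul a b) ns Ps) = Inf \<longrightarrow> (\<forall>n \<in> set ns. n = 0))"

definition ec_rank_ge :: "rat \<Rightarrow> rat \<Rightarrow> nat \<Rightarrow> bool" where
  "ec_rank_ge a b r =
     (\<exists>Ps. length Ps = r \<and> (\<forall>P \<in> set Ps. on_curve a b P) \<and> ec_lin_indep a b Ps)"

text \<open>The cubic  E_k : x^3 + y^3 = k  (k nonzero) is birationally isomorphic over Q, via
  X = 12k/(x+y), Y = 36k(x-y)/(x+y)  (point [1:-1:0] going to the point at infinity),
  to its Weierstrass model  Y^2 = X^3 - 432 k^2.  Its Mordell--Weil group (hence rank)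
  is defined through this model.\<close>
definition Ek_rank_ge :: "int \<Rightarrow> nat \<Rightarrow> bool" where
  "Ek_rank_ge k r = ec_rank_ge 0 (- 432 * (of_int k)^2) r"

end

theory Submission
  imports Defs "HOL-Number_Theory.Euler_Criterion" "HOL-Number_Theory.Mod_Exp"
begin

text \<open>
  For a prime \<open>p > 3\<close> and a root \<open>r\<close> of \<open>x\<^sup>3 + b\<close> modulo \<open>p\<close>, sending a rational point
  \<open>(x, y)\<close> to the Legendre symbol of \<open>x - r\<close> modulo \<open>p\<close> (suitably read when \<open>x\<close> is not
  \<open>p\<close>-integral or \<open>x = r mod p\<close>) is a homomorphism from the Mordell-Weil group to \<open>{1, -1}\<close>:
  the \<open>x\<close>-coordinates of the three points of the curve on a line \<open>y = l x + \<nu>\<close> satisfy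
  \<open>(x\<^sub>1 - r) (x\<^sub>2 - r) (x\<^sub>3 - r) = (l r + \<nu>)\<^sup>2 - (r\<^sup>3 + b)\<close>, a square modulo \<open>p\<close>.
  If \<open>n\<^sub>1 P\<^sub>1 + ... + n\<^sub>1\<^sub>0 P\<^sub>1\<^sub>0 = 0\<close>, ten such characters whose sign matrix on the
  \<open>P\<^sub>i\<close> is invertible modulo 2 force every \<open>n\<^sub>i\<close> to be even. Since \<open>x\<^sup>3 + b\<close> has no rational
  root there is no 2-torsion, so the relation can be halved, and infinite descent gives \<open>n\<^sub>i = 0\<close>.
  The group axioms, associativity included, follow from the chord-tangent formulas by polynomial
  identities.
  For \<open>E\<^sub>k\<close> the argument is repeated for the images of the points under a 3-isogeny onto the
  model \<open>y\<^sup>2 = x\<^sup>3 - 432 k\<^sup>2\<close>.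
\<close>

text \<open>The second conjunct is \<open>y\<^sub>2\<^sup>2 - y\<^sub>1\<^sup>2 = x\<^sub>2\<^sup>3 - x\<^sub>1\<^sup>3\<close> divided by \<open>x\<^sub>2 - x\<^sub>1\<close>; for
  \<open>x\<^sub>1 = x\<^sub>2\<close> it is the tangent condition \<open>2 l y\<^sub>1 = 3 x\<^sub>1\<^sup>2\<close>, so one predicate covers chords and tangents.\<close>
definition chord_slope :: "rat \<Rightarrow> rat \<Rightarrow> rat \<Rightarrow> rat \<Rightarrow> rat \<Rightarrow> bool" where
  "chord_slope x1 y1 x2 y2 l \<longleftrightarrow> y2 = y1 + l*(x2 - x1) \<and> 2*l*y1 + l^2*(x2 - x1) = x1^2 + x1*x2 + x2^2"

definition chord_sum :: "rat \<Rightarrow> rat \<Rightarrow> rat \<Rightarrow> rat \<Rightarrow> ec_pt" where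
  "chord_sum x1 y1 x2 l = Aff (l^2 - x1 - x2) (l*(x1 - (l^2 - x1 - x2)) - y1)"

lemma on_curve_Aff[simp]: "on_curve 0 b (Aff x y) \<longleftrightarrow> y^2 = x^3 + b"
  by (simp add: on_curve_def)

lemma on_curve_Inf[simp]: "on_curve 0 b Inf"
  by (simp add: on_curve_def)

lemma ec_add_Inf_right[simp]: "ec_add a b P Inf = P"
  by (cases P) auto

lemma chord_slope_same_x:
  assumes "y1^2 = x1^3 + b" "b \<noteq> 0" "chord_slope x1 y1 x1 y2 l" shows "y2 = y1" "y1 \<noteq> 0"
proof -
  show "y2 = y1" using assms(3) by (simp add: chord_slope_def)
  show "y1 \<noteq> 0"
  proof
    assume "y1 = 0"
    then have "x1 = 0" using assms(3) by (simp add: chord_slope_def power2_eq_square)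
    then show False using assms \<open>y1 = 0\<close> by simp
  qed
qed

lemma ec_add_chord:
  assumes c1: "y1^2 = x1^3 + b" and b_nz: "b \<noteq> 0" and s: "chord_slope x1 y1 x2 y2 l"
  shows "ec_add 0 b (Aff x1 y1) (Aff x2 y2) = chord_sum x1 y1 x2 l"
proof (cases "x1 = x2")
  case True
  with chord_slope_same_x[OF c1 b_nz] s have e: "y2 = y1" "y1 \<noteq> 0" by auto
  have l: "l = 3*x1^2/(2*y1)" using s True e by (simp add: chord_slope_def field_simps power2_eq_square)
  have "\<not> (x1 = x2 \<and> y1 = - y2)" using e by auto
  then show ?thesis using True e l by (simp add: chord_sum_def Let_def)
next
  case False
  have l: "l = (y2 - y1)/(x2 - x1)" using s False by (simp add: chord_slope_def field_simps)
  show ?thesis using False l by (simp add: chord_sum_def Let_def)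
qed

lemma chord_slope_exists:
  assumes c1: "y1^2 = x1^3 + b" and c2: "y2^2 = x2^3 + b" and nv: "\<not> (x1 = x2 \<and> y1 = - y2)"
  obtains l where "chord_slope x1 y1 x2 y2 l"
proof (cases "x1 = x2")
  case True
  then have "(y1 - y2)*(y1 + y2) = 0" using c1 c2 by (simp add: algebra_simps power2_eq_square)
  then have "y1 = y2" using nv True by auto
  then have "y1 \<noteq> 0" using nv True by auto
  then have "chord_slope x1 y1 x2 y2 (3*x1^2/(2*y1))"
    using True \<open>y1 = y2\<close> by (simp add: chord_slope_def field_simps power2_eq_square)
  then show ?thesis by (rule that)
next
  case False
  define l where "l = (y2 - y1)/(x2 - x1)"
  have a: "y2 = y1 + l*(x2 - x1)" using False by (simp add: l_def field_simps)
  have "(x2 - x1) * (2*l*y1 + l^2*(x2 - x1)) = (x2 - x1) * (x1^2 + x1*x2 + x2^2)"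
    using a c1 c2 by Groebner_Basis.algebra
  then have "2*l*y1 + l^2*(x2 - x1) = x1^2 + x1*x2 + x2^2" using False by simp
  then show ?thesis using a that by (auto simp: chord_slope_def)
qed

lemma on_curve_chord_sum:
  assumes c1: "y1^2 = x1^3 + b" and s: "chord_slope x1 y1 x2 y2 l"
  shows "on_curve 0 b (chord_sum x1 y1 x2 l)"
  using s c1 unfolding chord_slope_def chord_sum_def on_curve_Aff by Groebner_Basis.algebra

lemma ec_add_cases [case_names Inf_left Inf_right opposite chord]:
  assumes "on_curve 0 b P" "on_curve 0 b Q" "b \<noteq> 0"
  obtains "P = Inf" | "Q = Inf"
  | x y where "P = Aff x y" "Q = Aff x (- y)"
  | x1 y1 x2 y2 l where "P = Aff x1 y1" "Q = Aff x2 y2" "y1^2 = x1^3 + b" "y2^2 = x2^3 + b"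
      "chord_slope x1 y1 x2 y2 l" "ec_add 0 b P Q = chord_sum x1 y1 x2 l"
proof (cases P; cases Q)
  fix x1 y1 x2 y2 assume P: "P = Aff x1 y1" and Q: "Q = Aff x2 y2"
  then have c: "y1^2 = x1^3 + b" "y2^2 = x2^3 + b" using assms by simp_all
  show thesis
  proof (cases "x1 = x2 \<and> y1 = - y2")
    case False
    then obtain l where s: "chord_slope x1 y1 x2 y2 l" using chord_slope_exists[OF c] by blast
    then show thesis using that(4)[OF P Q c s] ec_add_chord[OF c(1) assms(3) s] P Q by simp
  qed (use that(3) P Q in auto)
qed (use that in auto)

lemma on_curve_ec_add:
  assumes "on_curve 0 b P" "on_curve 0 b Q" "b \<noteq> 0"
  shows "on_curve 0 b (ec_add 0 b P Q)"
  using assms by (cases rule: ec_add_cases) (use assms in \<open>auto simp: on_curve_chord_sum\<close>)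

lemma chord_slope_sym: assumes "chord_slope x1 y1 x2 y2 l" shows "chord_slope x2 y2 x1 y1 l"
proof -
  have a: "y2 = y1 + l*(x2 - x1)" and r: "2*l*y1 + l^2*(x2 - x1) = x1^2 + x1*x2 + x2^2"
    using assms by (auto simp: chord_slope_def)
  have "y1 = y2 + l*(x1 - x2)" using a by (simp add: algebra_simps)
  moreover have "2*l*y2 + l^2*(x1 - x2) = x2^2 + x2*x1 + x1^2" using a r by Groebner_Basis.algebra
  ultimately show ?thesis by (simp add: chord_slope_def)
qed

lemma chord_sum_sym: assumes "chord_slope x1 y1 x2 y2 l" shows "chord_sum x1 y1 x2 l = chord_sum x2 y2 x1 l"
  using assms unfolding chord_slope_def chord_sum_def by (auto simp: algebra_simps)

lemma ec_add_commute:
  assumes "on_curve 0 b P" "on_curve 0 b Q" "b \<noteq> 0"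
  shows "ec_add 0 b P Q = ec_add 0 b Q P"
  using assms
proof (cases rule: ec_add_cases)
  case (chord x1 y1 x2 y2 l)
  then show ?thesis
    using ec_add_chord[OF _ assms(3) chord_slope_sym] chord_sum_sym by simp
qed auto

lemma on_curve_ec_neg[simp]: "on_curve 0 b (ec_neg P) \<longleftrightarrow> on_curve 0 b P"
  by (cases P) auto

lemma ec_neg_ec_neg[simp]: "ec_neg (ec_neg P) = P"
  by (cases P) auto

lemma ec_add_neg_right[simp]: "ec_add 0 b P (ec_neg P) = Inf"
  by (cases P) auto

lemma ec_neg_ec_add:
  assumes "on_curve 0 b P" "on_curve 0 b Q" "b \<noteq> 0"
  shows "ec_neg (ec_add 0 b P Q) = ec_add 0 b (ec_neg P) (ec_neg Q)"
  using assms
proof (cases rule: ec_add_cases)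
  case (chord x1 y1 x2 y2 l)
  have "chord_slope x1 (-y1) x2 (-y2) (-l)" using chord(5) by (auto simp: chord_slope_def algebra_simps)
  moreover have "(-y1)^2 = x1^3 + b" using chord(3) by simp
  ultimately have "ec_add 0 b (Aff x1 (-y1)) (Aff x2 (-y2)) = chord_sum x1 (-y1) x2 (-l)"
    using ec_add_chord[OF _ assms(3)] by blast
  then have "ec_add 0 b (ec_neg P) (ec_neg Q) = chord_sum x1 (-y1) x2 (-l)"
    using chord(1,2) by simp
  moreover have "ec_neg (chord_sum x1 y1 x2 l) = chord_sum x1 (-y1) x2 (-l)"
    by (simp add: chord_sum_def algebra_simps)
  ultimately show ?thesis using chord(6) by simp
qed auto

lemma chord_slope_back:
  assumes "chord_slope x1 y1 x2 y2 l"
  shows "chord_slope (l^2 - x1 - x2) (l*(x1 - (l^2 - x1 - x2)) - y1) x2 (-y2) (-l)"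
proof -
  have a: "y2 = y1 + l*(x2 - x1)" and r: "2*l*y1 + l^2*(x2 - x1) = x1^2 + x1*x2 + x2^2"
    using assms by (auto simp: chord_slope_def)
  have "- y2 = (l*(x1 - (l^2 - x1 - x2)) - y1) + (-l)*(x2 - (l^2 - x1 - x2))"
    using a by (simp add: algebra_simps)
  moreover have "2*(-l)*(l*(x1 - (l^2 - x1 - x2)) - y1) + (-l)^2*(x2 - (l^2 - x1 - x2))
     = (l^2 - x1 - x2)^2 + (l^2 - x1 - x2)*x2 + x2^2"
    using r by Groebner_Basis.algebra
  ultimately show ?thesis by (simp add: chord_slope_def)
qed

lemma ec_add_cancel_right:
  assumes "on_curve 0 b P" "on_curve 0 b Q" "b \<noteq> 0"
  shows "ec_add 0 b (ec_add 0 b P Q) (ec_neg Q) = P"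
  using assms
proof (cases rule: ec_add_cases)
  case (chord x1 y1 x2 y2 l)
  have "on_curve 0 b (chord_sum x1 y1 x2 l)" using on_curve_chord_sum chord by blast
  then have "ec_add 0 b (chord_sum x1 y1 x2 l) (ec_neg Q)
      = chord_sum (l^2 - x1 - x2) (l*(x1 - (l^2 - x1 - x2)) - y1) x2 (-l)"
    using ec_add_chord[OF _ assms(3) chord_slope_back[OF chord(5)]] chord by (simp add: chord_sum_def)
  also have "\<dots> = P" using chord by (simp add: chord_sum_def algebra_simps)
  finally show ?thesis using chord by simp
qed auto

lemma assoc_slopes_sum:
  fixes x1 y1 x2 x3 l1 l2 l3 l4 :: rat
  assumes "2*l1*y1 + l1^2*(x2 - x1) = x1^2 + x1*x2 + x2^2"
    and "2*l3*(y1 + l1*(x2 - x1)) + l3^2*(x3 - x2) = x2^2 + x2*x3 + x3^2"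
    and "((y1 + l1*(x2 - x1)) + l3*(x3 - x2)) - (l1*(x1 - (l1^2 - x1 - x2)) - y1) = l2*(x3 - (l1^2 - x1 - x2))"
    and "x3 \<noteq> l1^2 - x1 - x2"
    and "(l3*(x2 - (l3^2 - x2 - x3)) - (y1 + l1*(x2 - x1))) - y1 = l4*((l3^2 - x2 - x3) - x1)"
    and "l3^2 - x2 - x3 \<noteq> x1"
  shows "l1 + l2 = l3 + l4"
  using assms by Groebner_Basis.algebra

lemma assoc_slopes_prod:
  fixes x1 y1 x2 x3 l1 l2 l3 l4 :: rat
  assumes "2*l1*y1 + l1^2*(x2 - x1) = x1^2 + x1*x2 + x2^2"
    and "2*l3*(y1 + l1*(x2 - x1)) + l3^2*(x3 - x2) = x2^2 + x2*x3 + x3^2"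
    and "((y1 + l1*(x2 - x1)) + l3*(x3 - x2)) - (l1*(x1 - (l1^2 - x1 - x2)) - y1) = l2*(x3 - (l1^2 - x1 - x2))"
    and "x3 \<noteq> l1^2 - x1 - x2"
    and "(l3*(x2 - (l3^2 - x2 - x3)) - (y1 + l1*(x2 - x1))) - y1 = l4*((l3^2 - x2 - x3) - x1)"
    and "l3^2 - x2 - x3 \<noteq> x1"
  shows "l1*l2 + (l1^2 - x1 - x2) = l3*l4 + (l3^2 - x2 - x3)"
  using assms by Groebner_Basis.algebra

lemma assoc_generic_x:
  fixes x1 y1 x2 x3 l1 l2 l3 l4 :: rat
  assumes "2*l1*y1 + l1^2*(x2 - x1) = x1^2 + x1*x2 + x2^2"
    and "2*l3*(y1 + l1*(x2 - x1)) + l3^2*(x3 - x2) = x2^2 + x2*x3 + x3^2"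
    and "((y1 + l1*(x2 - x1)) + l3*(x3 - x2)) - (l1*(x1 - (l1^2 - x1 - x2)) - y1) = l2*(x3 - (l1^2 - x1 - x2))"
    and "x3 \<noteq> l1^2 - x1 - x2"
    and "(l3*(x2 - (l3^2 - x2 - x3)) - (y1 + l1*(x2 - x1))) - y1 = l4*((l3^2 - x2 - x3) - x1)"
    and "l3^2 - x2 - x3 \<noteq> x1"
  shows "l2^2 - (l1^2 - x1 - x2) - x3 = l4^2 - x1 - (l3^2 - x2 - x3)"
proof -
  have "l1 + l2 = l3 + l4" by (rule assoc_slopes_sum[OF assms])
  moreover have "l1*l2 + (l1^2 - x1 - x2) = l3*l4 + (l3^2 - x2 - x3)" by (rule assoc_slopes_prod[OF assms])
  ultimately show ?thesis by Groebner_Basis.algebra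
qed

lemma assoc_generic_y:
  fixes x1 y1 x2 x3 l1 l2 l3 l4 :: rat
  assumes "2*l1*y1 + l1^2*(x2 - x1) = x1^2 + x1*x2 + x2^2"
    and "2*l3*(y1 + l1*(x2 - x1)) + l3^2*(x3 - x2) = x2^2 + x2*x3 + x3^2"
    and "((y1 + l1*(x2 - x1)) + l3*(x3 - x2)) - (l1*(x1 - (l1^2 - x1 - x2)) - y1) = l2*(x3 - (l1^2 - x1 - x2))"
    and "x3 \<noteq> l1^2 - x1 - x2"
    and "(l3*(x2 - (l3^2 - x2 - x3)) - (y1 + l1*(x2 - x1))) - y1 = l4*((l3^2 - x2 - x3) - x1)"
    and "l3^2 - x2 - x3 \<noteq> x1"
  shows "l2*((l1^2 - x1 - x2) - (l2^2 - (l1^2 - x1 - x2) - x3)) - (l1*(x1 - (l1^2 - x1 - x2)) - y1)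
    = l4*(x1 - (l4^2 - x1 - (l3^2 - x2 - x3))) - y1"
  using assms by Groebner_Basis.algebra

lemma assoc_doubling_x:
  fixes x1 y1 x2 l1 l2 l3 l4 :: rat
  assumes "y1^2 \<noteq> x1^3" and "2*l1*y1 + l1^2*(x2 - x1) = x1^2 + x1*x2 + x2^2"
    and "2*l2*(l1*(x1 - (l1^2 - x1 - x2)) - y1) = 3*(l1^2 - x1 - x2)^2"
    and "(l1*(x1 - (l1^2 - x1 - x2)) - y1) - (y1 + l1*(x2 - x1)) = l3*((l1^2 - x1 - x2) - x2)"
    and "2*l3*(y1 + l1*(x2 - x1)) + l3^2*((l1^2 - x1 - x2) - x2) = x2^2 + x2*(l1^2 - x1 - x2) + (l1^2 - x1 - x2)^2"
    and "(l3*(x2 - (l3^2 - x2 - (l1^2 - x1 - x2))) - (y1 + l1*(x2 - x1))) - y1 = l4*((l3^2 - x2 - (l1^2 - x1 - x2)) - x1)"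
    and "l3^2 - x2 - (l1^2 - x1 - x2) \<noteq> x1"
  shows "l2^2 - (l1^2 - x1 - x2) - (l1^2 - x1 - x2) = l4^2 - x1 - (l3^2 - x2 - (l1^2 - x1 - x2))"
  using assms by Groebner_Basis.algebra

lemma assoc_doubling_y:
  fixes x1 y1 x2 l1 l2 l3 l4 :: rat
  assumes "y1^2 \<noteq> x1^3" and "2*l1*y1 + l1^2*(x2 - x1) = x1^2 + x1*x2 + x2^2"
    and "2*l2*(l1*(x1 - (l1^2 - x1 - x2)) - y1) = 3*(l1^2 - x1 - x2)^2"
    and "(l1*(x1 - (l1^2 - x1 - x2)) - y1) - (y1 + l1*(x2 - x1)) = l3*((l1^2 - x1 - x2) - x2)"
    and "2*l3*(y1 + l1*(x2 - x1)) + l3^2*((l1^2 - x1 - x2) - x2) = x2^2 + x2*(l1^2 - x1 - x2) + (l1^2 - x1 - x2)^2"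
    and "(l3*(x2 - (l3^2 - x2 - (l1^2 - x1 - x2))) - (y1 + l1*(x2 - x1))) - y1 = l4*((l3^2 - x2 - (l1^2 - x1 - x2)) - x1)"
    and "l3^2 - x2 - (l1^2 - x1 - x2) \<noteq> x1"
  shows "l2*((l1^2 - x1 - x2) - (l2^2 - (l1^2 - x1 - x2) - (l1^2 - x1 - x2))) - (l1*(x1 - (l1^2 - x1 - x2)) - y1)
    = l4*(x1 - (l4^2 - x1 - (l3^2 - x2 - (l1^2 - x1 - x2)))) - y1"
  using assms by Groebner_Basis.algebra

lemma assoc_doubling_tangent_x:
  fixes x1 y1 x2 l1 l2 l3 l4 :: rat
  assumes "y1^2 \<noteq> x1^3" and "2*l1*y1 + l1^2*(x2 - x1) = x1^2 + x1*x2 + x2^2"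
    and "2*l2*(l1*(x1 - (l1^2 - x1 - x2)) - y1) = 3*(l1^2 - x1 - x2)^2"
    and "(l1*(x1 - (l1^2 - x1 - x2)) - y1) - (y1 + l1*(x2 - x1)) = l3*((l1^2 - x1 - x2) - x2)"
    and "2*l3*(y1 + l1*(x2 - x1)) + l3^2*((l1^2 - x1 - x2) - x2) = x2^2 + x2*(l1^2 - x1 - x2) + (l1^2 - x1 - x2)^2"
    and "l3^2 - x2 - (l1^2 - x1 - x2) = x1"
    and "l3*(x2 - (l3^2 - x2 - (l1^2 - x1 - x2))) - (y1 + l1*(x2 - x1)) = y1"
    and "2*l4*y1 = 3*x1^2"
  shows "l2^2 - (l1^2 - x1 - x2) - (l1^2 - x1 - x2) = l4^2 - x1 - (l3^2 - x2 - (l1^2 - x1 - x2))"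
  using assms by Groebner_Basis.algebra

lemma assoc_doubling_tangent_y:
  fixes x1 y1 x2 l1 l2 l3 l4 :: rat
  assumes "y1^2 \<noteq> x1^3" and "2*l1*y1 + l1^2*(x2 - x1) = x1^2 + x1*x2 + x2^2"
    and "2*l2*(l1*(x1 - (l1^2 - x1 - x2)) - y1) = 3*(l1^2 - x1 - x2)^2"
    and "(l1*(x1 - (l1^2 - x1 - x2)) - y1) - (y1 + l1*(x2 - x1)) = l3*((l1^2 - x1 - x2) - x2)"
    and "2*l3*(y1 + l1*(x2 - x1)) + l3^2*((l1^2 - x1 - x2) - x2) = x2^2 + x2*(l1^2 - x1 - x2) + (l1^2 - x1 - x2)^2"
    and "l3^2 - x2 - (l1^2 - x1 - x2) = x1"
    and "l3*(x2 - (l3^2 - x2 - (l1^2 - x1 - x2))) - (y1 + l1*(x2 - x1)) = y1"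
    and "2*l4*y1 = 3*x1^2"
  shows "l2*((l1^2 - x1 - x2) - (l2^2 - (l1^2 - x1 - x2) - (l1^2 - x1 - x2))) - (l1*(x1 - (l1^2 - x1 - x2)) - y1)
    = l4*(x1 - (l4^2 - x1 - (l3^2 - x2 - (l1^2 - x1 - x2)))) - y1"
  using assms by Groebner_Basis.algebra

lemma same_x_imp_eq:
  fixes y1 y2 x b :: rat
  assumes "y1^2 = x^3 + b" "y2^2 = x^3 + b" "y1 \<noteq> - y2" shows "y1 = y2"
proof -
  have "(y1 - y2)*(y1 + y2) = 0" using assms by (simp add: algebra_simps power2_eq_square)
  then show ?thesis using assms(3) by (auto simp: add_eq_0_iff2)
qed

lemma chord_sum_assoc_doubling:
  assumes b_nz: "b \<noteq> 0" and c1: "y1^2 = x1^3 + b"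
    and s1: "chord_slope x1 y1 x2 y2 l1" and S: "chord_sum x1 y1 x2 l1 = Aff xS yS"
    and s2: "chord_slope xS yS xS yS l2"
    and s3: "chord_slope x2 y2 xS yS l3" and T: "chord_sum x2 y2 xS l3 = Aff xT yT"
    and s4: "chord_slope x1 y1 xT yT l4" and tangent: "x1 = xT \<Longrightarrow> y1 = yT"
  shows "chord_sum xS yS xS l2 = chord_sum x1 y1 xT l4"
proof -
  have eS: "xS = l1^2 - x1 - x2" "yS = l1*(x1 - (l1^2 - x1 - x2)) - y1" using S by (auto simp: chord_sum_def)
  have eT: "xT = l3^2 - x2 - xS" "yT = l3*(x2 - xT) - y2" using T by (auto simp: chord_sum_def)
  have e2: "y2 = y1 + l1*(x2 - x1)" and R1: "2*l1*y1 + l1^2*(x2 - x1) = x1^2 + x1*x2 + x2^2"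
    using s1 by (auto simp: chord_slope_def)
  have R2: "2*l2*yS = 3*xS^2" using s2 by (simp add: chord_slope_def power2_eq_square)
  have H3: "yS - y2 = l3*(xS - x2)" and R3: "2*l3*y2 + l3^2*(xS - x2) = x2^2 + x2*xS + xS^2"
    using s3 by (auto simp: chord_slope_def)
  have b_nz': "y1^2 \<noteq> x1^3" using c1 b_nz by simp
  have "l2^2 - (l1^2 - x1 - x2) - (l1^2 - x1 - x2) = l4^2 - x1 - (l3^2 - x2 - (l1^2 - x1 - x2))
    \<and> l2*((l1^2 - x1 - x2) - (l2^2 - (l1^2 - x1 - x2) - (l1^2 - x1 - x2))) - (l1*(x1 - (l1^2 - x1 - x2)) - y1)
      = l4*(x1 - (l4^2 - x1 - (l3^2 - x2 - (l1^2 - x1 - x2)))) - y1"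
  proof (cases "x1 = xT")
    case True
    have R4: "2*l4*y1 = 3*x1^2" using s4 True by (simp add: chord_slope_def power2_eq_square)
    have T1: "l3^2 - x2 - (l1^2 - x1 - x2) = x1" using True by (simp add: eT eS)
    have T2: "l3*(x2 - (l3^2 - x2 - (l1^2 - x1 - x2))) - (y1 + l1*(x2 - x1)) = y1"
      using tangent[OF True] by (simp add: eT eS e2)
    show ?thesis
      using assoc_doubling_tangent_x[OF b_nz' R1 _ _ _ T1 T2 R4] assoc_doubling_tangent_y[OF b_nz' R1 _ _ _ T1 T2 R4]
        R2 H3 R3 by (simp add: eS e2)
  next
    case False
    have n4: "l3^2 - x2 - (l1^2 - x1 - x2) \<noteq> x1" using False by (simp add: eT eS)
    have H4: "l3*(x2 - (l3^2 - x2 - (l1^2 - x1 - x2))) - (y1 + l1*(x2 - x1)) - y1 = l4*((l3^2 - x2 - (l1^2 - x1 - x2)) - x1)"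
      using s4 by (simp add: chord_slope_def eT eS e2)
    show ?thesis
      using assoc_doubling_x[OF b_nz' R1 _ _ _ H4 n4] assoc_doubling_y[OF b_nz' R1 _ _ _ H4 n4]
        R2 H3 R3 by (simp add: eS e2)
  qed
  then show ?thesis by (simp add: chord_sum_def eS eT)
qed

lemma ec_add_assoc_doubling:
  assumes oP: "on_curve 0 b P" and oQ: "on_curve 0 b Q" and b_nz: "b \<noteq> 0"
    and PQ: "ec_add 0 b P Q = Aff xS yS" and "yS \<noteq> 0"
  shows "ec_add 0 b (Aff xS yS) (Aff xS yS) = ec_add 0 b P (ec_add 0 b Q (Aff xS yS))"
  using oP oQ b_nz
proof (cases rule: ec_add_cases)
  case (chord x1 y1 x2 y2 l1)
  have S: "chord_sum x1 y1 x2 l1 = Aff xS yS" using chord(6) PQ by simp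
  have cS: "yS^2 = xS^3 + b" using on_curve_chord_sum[OF chord(3,5)] S by simp
  then have oS: "on_curve 0 b (Aff xS yS)" by simp
  obtain l2 where s2: "chord_slope xS yS xS yS l2"
    by (rule chord_slope_exists[OF cS cS]) (use \<open>yS \<noteq> 0\<close> in auto)
  show ?thesis
  proof (cases "x2 = xS \<and> y2 = - yS")
    case True
    then have "Aff xS yS = ec_neg Q" using chord(2) by simp
    then have "ec_add 0 b (Aff xS yS) (Aff xS yS) = P"
      using ec_add_cancel_right[OF oP oQ b_nz] PQ by simp
    then show ?thesis using True chord(2) by simp
  next
    case False
    obtain l3 where s3: "chord_slope x2 y2 xS yS l3" by (rule chord_slope_exists[OF chord(4) cS False])
    obtain xT yT where T: "chord_sum x2 y2 xS l3 = Aff xT yT" by (simp add: chord_sum_def)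
    have QS: "ec_add 0 b Q (Aff xS yS) = Aff xT yT" using ec_add_chord[OF chord(4) b_nz s3] T chord(2) by simp
    have cT: "yT^2 = xT^3 + b" using on_curve_chord_sum[OF chord(4) s3] T by simp
    have not_opposite: "\<not> (x1 = xT \<and> y1 = - yT)"
    proof
      assume "x1 = xT \<and> y1 = - yT"
      then have P: "P = ec_neg (ec_add 0 b Q (Aff xS yS))" using QS chord(1) by simp
      have "Aff xS yS = ec_add 0 b P Q" using PQ by simp
      also have "\<dots> = ec_add 0 b (ec_add 0 b (ec_neg (Aff xS yS)) (ec_neg Q)) (ec_neg (ec_neg Q))"
      proof -
        have "ec_add 0 b (ec_neg Q) (ec_neg (Aff xS yS)) = ec_add 0 b (ec_neg (Aff xS yS)) (ec_neg Q)"
          by (rule ec_add_commute) (use oQ oS b_nz in auto)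
        then show ?thesis using P ec_neg_ec_add[OF oQ oS b_nz] by simp
      qed
      also have "\<dots> = ec_neg (Aff xS yS)" by (rule ec_add_cancel_right) (use oQ oS b_nz in auto)
      finally show False using \<open>yS \<noteq> 0\<close> by simp
    qed
    obtain l4 where s4: "chord_slope x1 y1 xT yT l4" by (rule chord_slope_exists[OF chord(3) cT not_opposite])
    have "x1 = xT \<Longrightarrow> y1 = yT" using same_x_imp_eq[of y1 x1 b yT] chord(3) cT not_opposite by auto
    then have "chord_sum xS yS xS l2 = chord_sum x1 y1 xT l4"
      by (rule chord_sum_assoc_doubling[OF b_nz chord(3,5) S s2 s3 T s4])
    then show ?thesis
      using ec_add_chord[OF cS b_nz s2] ec_add_chord[OF chord(3) b_nz s4] QS chord(1) by simp
  qed
qed (use PQ in auto)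

lemma chord_sum_assoc_generic:
  assumes s1: "chord_slope x1 y1 x2 y2 l1" and s3: "chord_slope x2 y2 x3 y3 l3"
    and S: "chord_sum x1 y1 x2 l1 = Aff xS yS" and T: "chord_sum x2 y2 x3 l3 = Aff xT yT"
    and s2: "chord_slope xS yS x3 y3 l2" and n2: "x3 \<noteq> xS"
    and s4: "chord_slope x1 y1 xT yT l4" and n4: "xT \<noteq> x1"
  shows "chord_sum xS yS x3 l2 = chord_sum x1 y1 xT l4"
proof -
  have eS: "xS = l1^2 - x1 - x2" "yS = l1*(x1 - (l1^2 - x1 - x2)) - y1" using S by (auto simp: chord_sum_def)
  have eT: "xT = l3^2 - x2 - x3" "yT = l3*(x2 - (l3^2 - x2 - x3)) - y2" using T by (auto simp: chord_sum_def)
  have e2: "y2 = y1 + l1*(x2 - x1)" and R1: "2*l1*y1 + l1^2*(x2 - x1) = x1^2 + x1*x2 + x2^2"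
    using s1 by (auto simp: chord_slope_def)
  have e3: "y3 = y2 + l3*(x3 - x2)" and R3: "2*l3*y2 + l3^2*(x3 - x2) = x2^2 + x2*x3 + x3^2"
    using s3 by (auto simp: chord_slope_def)
  have H2: "y3 = yS + l2*(x3 - xS)" using s2 by (simp add: chord_slope_def)
  have H4: "yT = y1 + l4*(xT - x1)" using s4 by (simp add: chord_slope_def)
  have R3': "2*l3*(y1 + l1*(x2 - x1)) + l3^2*(x3 - x2) = x2^2 + x2*x3 + x3^2" using R3 e2 by simp
  have H2': "((y1 + l1*(x2 - x1)) + l3*(x3 - x2)) - (l1*(x1 - (l1^2 - x1 - x2)) - y1) = l2*(x3 - (l1^2 - x1 - x2))"
    using H2 e2 e3 eS by simp
  have n2': "x3 \<noteq> (l1^2 - x1 - x2)" using n2 eS by simp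
  have H4': "(l3*(x2 - (l3^2 - x2 - x3)) - (y1 + l1*(x2 - x1))) - y1 = l4*((l3^2 - x2 - x3) - x1)"
    using H4 eT e2 by simp
  have n4': "(l3^2 - x2 - x3) \<noteq> x1" using n4 eT by simp
  have hx: "l2^2 - (l1^2 - x1 - x2) - x3 = l4^2 - x1 - (l3^2 - x2 - x3)"
    by (rule assoc_generic_x[OF R1 R3' H2' n2' H4' n4'])
  have hy: "l2*((l1^2 - x1 - x2) - (l2^2 - (l1^2 - x1 - x2) - x3)) - (l1*(x1 - (l1^2 - x1 - x2)) - y1) = l4*(x1 - (l4^2 - x1 - (l3^2 - x2 - x3))) - y1"
    by (rule assoc_generic_y[OF R1 R3' H2' n2' H4' n4'])
  show ?thesis using hx hy eS eT by (simp add: chord_sum_def)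
qed

lemma ec_add_assoc_affine:
  assumes oP: "on_curve 0 b P" and oQ: "on_curve 0 b Q" and oR: "on_curve 0 b R" and b_nz: "b \<noteq> 0"
    and P: "P = Aff x1 y1" and Q: "Q = Aff x2 y2" and R: "R = Aff x3 y3"
    and nPQ: "Q \<noteq> ec_neg P" and nQR: "R \<noteq> ec_neg Q"
    and nSR: "R \<noteq> ec_neg (ec_add 0 b P Q)" and nPT: "P \<noteq> ec_neg (ec_add 0 b Q R)"
  shows "ec_add 0 b (ec_add 0 b P Q) R = ec_add 0 b P (ec_add 0 b Q R)"
proof -
  have c1: "y1^2 = x1^3 + b" and c2: "y2^2 = x2^3 + b" and c3: "y3^2 = x3^3 + b"
    using oP oQ oR P Q R by auto
  obtain l1 where s1: "chord_slope x1 y1 x2 y2 l1" by (rule chord_slope_exists[OF c1 c2]) (use nPQ P Q in auto)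
  obtain l3 where s3: "chord_slope x2 y2 x3 y3 l3" by (rule chord_slope_exists[OF c2 c3]) (use nQR Q R in auto)
  obtain xS yS where S: "chord_sum x1 y1 x2 l1 = Aff xS yS" by (simp add: chord_sum_def)
  obtain xT yT where T: "chord_sum x2 y2 x3 l3 = Aff xT yT" by (simp add: chord_sum_def)
  have PQ: "ec_add 0 b P Q = Aff xS yS" using ec_add_chord[OF c1 b_nz s1] S P Q by simp
  have QR: "ec_add 0 b Q R = Aff xT yT" using ec_add_chord[OF c2 b_nz s3] T Q R by simp
  have cS: "yS^2 = xS^3 + b" using on_curve_chord_sum[OF c1 s1] S by simp
  have cT: "yT^2 = xT^3 + b" using on_curve_chord_sum[OF c2 s3] T by simp
  have nvU: "\<not> (xS = x3 \<and> yS = - y3)" using nSR PQ R by auto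
  have nvV: "\<not> (x1 = xT \<and> y1 = - yT)" using nPT QR P by auto
  consider (sum_is_R) "xS = x3" | (sum_is_P) "xS \<noteq> x3" "x1 = xT" | (generic) "xS \<noteq> x3" "x1 \<noteq> xT"
    by blast
  then show ?thesis
  proof cases
    case sum_is_R
    then have "yS = y3" using same_x_imp_eq[of yS xS b y3] cS c3 nvU by auto
    then have "R = Aff xS yS" and "yS \<noteq> 0" using sum_is_R nvU R by auto
    then show ?thesis using ec_add_assoc_doubling[OF oP oQ b_nz PQ] PQ by simp
  next
    case sum_is_P
    then have "yT = y1" using same_x_imp_eq[of yT xT b y1] cT c1 nvV by auto
    then have P': "P = Aff xT yT" and "yT \<noteq> 0" using sum_is_P nvV P by auto
    have RQ: "ec_add 0 b R Q = Aff xT yT" using QR ec_add_commute[OF oQ oR b_nz] by simp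
    have "ec_add 0 b (ec_add 0 b P Q) R = ec_add 0 b R (ec_add 0 b Q P)"
      using ec_add_commute on_curve_ec_add oP oQ oR b_nz by metis
    also have "\<dots> = ec_add 0 b (Aff xT yT) (Aff xT yT)"
      using ec_add_assoc_doubling[OF oR oQ b_nz RQ \<open>yT \<noteq> 0\<close>] P' by simp
    also have "\<dots> = ec_add 0 b P (ec_add 0 b Q R)" using P' QR by simp
    finally show ?thesis .
  next
    case generic
    obtain l2 where s2: "chord_slope xS yS x3 y3 l2" by (rule chord_slope_exists[OF cS c3 nvU])
    obtain l4 where s4: "chord_slope x1 y1 xT yT l4" by (rule chord_slope_exists[OF c1 cT nvV])
    have "chord_sum xS yS x3 l2 = chord_sum x1 y1 xT l4"
      by (rule chord_sum_assoc_generic[OF s1 s3 S T s2 _ s4]) (use generic in auto)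
    then show ?thesis using ec_add_chord[OF cS b_nz s2] ec_add_chord[OF c1 b_nz s4] PQ QR P R by simp
  qed
qed

lemma ec_add_assoc:
  assumes oP: "on_curve 0 b P" and oQ: "on_curve 0 b Q" and oR: "on_curve 0 b R" and b_nz: "b \<noteq> 0"
  shows "ec_add 0 b (ec_add 0 b P Q) R = ec_add 0 b P (ec_add 0 b Q R)"
proof -
  have cl: "\<And>A B. on_curve 0 b A \<Longrightarrow> on_curve 0 b B \<Longrightarrow> on_curve 0 b (ec_add 0 b A B)"
    using on_curve_ec_add b_nz by blast
  have comm: "\<And>A B. on_curve 0 b A \<Longrightarrow> on_curve 0 b B \<Longrightarrow> ec_add 0 b A B = ec_add 0 b B A"
    using ec_add_commute b_nz by blast
  have cancel: "\<And>A B. on_curve 0 b A \<Longrightarrow> on_curve 0 b B \<Longrightarrow> ec_add 0 b (ec_add 0 b A B) (ec_neg B) = A"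
    using ec_add_cancel_right b_nz by blast
  have neg: "\<And>A B. on_curve 0 b A \<Longrightarrow> on_curve 0 b B \<Longrightarrow> ec_neg (ec_add 0 b A B) = ec_add 0 b (ec_neg A) (ec_neg B)"
    using ec_neg_ec_add b_nz by blast
  consider "P = Inf \<or> Q = Inf \<or> R = Inf" | "Q = ec_neg P" | "R = ec_neg Q"
    | "R = ec_neg (ec_add 0 b P Q)" | "P = ec_neg (ec_add 0 b Q R)"
    | x1 y1 x2 y2 x3 y3 where "P = Aff x1 y1" "Q = Aff x2 y2" "R = Aff x3 y3" "Q \<noteq> ec_neg P"
        "R \<noteq> ec_neg Q" "R \<noteq> ec_neg (ec_add 0 b P Q)" "P \<noteq> ec_neg (ec_add 0 b Q R)"
    by (cases P; cases Q; cases R) auto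
  then show ?thesis
  proof cases
    case 1
    then show ?thesis by auto
  next
    case 2
    have "ec_add 0 b P (ec_add 0 b Q R) = ec_add 0 b (ec_add 0 b Q R) P"
      using comm cl oP oQ oR by blast
    also have "\<dots> = ec_add 0 b (ec_add 0 b R (ec_neg P)) (ec_neg (ec_neg P))"
      using 2 comm oP oR by simp
    also have "\<dots> = R" using cancel[of R "ec_neg P"] oR oP by simp
    finally show ?thesis using 2 by simp
  next
    case 3
    then show ?thesis using cancel oP oQ by simp
  next
    case 4
    have "ec_add 0 b Q R = ec_add 0 b Q (ec_add 0 b (ec_neg P) (ec_neg Q))"
      using 4 neg oP oQ by simp
    also have "\<dots> = ec_add 0 b (ec_add 0 b (ec_neg P) (ec_neg Q)) (ec_neg (ec_neg Q))"
      using comm cl oP oQ by simp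
    also have "\<dots> = ec_neg P" using cancel[of "ec_neg P" "ec_neg Q"] oP oQ by simp
    finally show ?thesis using 4 by simp
  next
    case 5
    have "ec_add 0 b P Q = ec_add 0 b (ec_add 0 b (ec_neg Q) (ec_neg R)) Q"
      using 5 neg oQ oR by simp
    also have "\<dots> = ec_add 0 b (ec_add 0 b (ec_neg R) (ec_neg Q)) (ec_neg (ec_neg Q))"
      using comm oQ oR by simp
    also have "\<dots> = ec_neg R" using cancel[of "ec_neg R" "ec_neg Q"] oQ oR by simp
    finally have "ec_add 0 b (ec_add 0 b P Q) R = Inf" using comm oR by simp
    moreover have "ec_add 0 b P (ec_add 0 b Q R) = Inf"
      using 5 comm cl oQ oR by (metis ec_add_neg_right on_curve_ec_neg)
    ultimately show ?thesis by simp
  next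
    case 6
    then show ?thesis by (rule ec_add_assoc_affine[OF oP oQ oR b_nz])
  qed
qed

lemma on_curve_ec_nmul: "on_curve 0 b P \<Longrightarrow> b \<noteq> 0 \<Longrightarrow> on_curve 0 b (ec_nmul 0 b n P)"
  by (induction n) (auto intro: on_curve_ec_add)

lemma ec_nmul_add:
  assumes oP: "on_curve 0 b P" and b_nz: "b \<noteq> 0"
  shows "ec_nmul 0 b (m + n) P = ec_add 0 b (ec_nmul 0 b m P) (ec_nmul 0 b n P)"
proof (induction m)
  case 0 then show ?case by simp
next
  case (Suc m)
  have "ec_nmul 0 b (Suc m + n) P = ec_add 0 b P (ec_nmul 0 b (m + n) P)" by simp
  also have "\<dots> = ec_add 0 b P (ec_add 0 b (ec_nmul 0 b m P) (ec_nmul 0 b n P))" using Suc by simp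
  also have "\<dots> = ec_add 0 b (ec_add 0 b P (ec_nmul 0 b m P)) (ec_nmul 0 b n P)"
    using ec_add_assoc[OF oP on_curve_ec_nmul[OF oP b_nz] on_curve_ec_nmul[OF oP b_nz] b_nz] by simp
  finally show ?case by simp
qed

lemma on_curve_ec_smul: "on_curve 0 b P \<Longrightarrow> b \<noteq> 0 \<Longrightarrow> on_curve 0 b (ec_smul 0 b n P)"
  by (simp add: ec_smul_def on_curve_ec_nmul)

lemma ec_smul_double:
  assumes oP: "on_curve 0 b P" and b_nz: "b \<noteq> 0"
  shows "ec_smul 0 b (2*m) P = ec_add 0 b (ec_smul 0 b m P) (ec_smul 0 b m P)"
proof (cases "m \<ge> 0")
  case True
  have "nat (2*m) = nat m + nat m" using True by simp
  then show ?thesis using True ec_nmul_add[OF oP b_nz] by (simp add: ec_smul_def)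
next
  case False
  have "nat (- (2*m)) = nat (-m) + nat (-m)" using False by simp
  then show ?thesis using False ec_nmul_add[OF oP b_nz] ec_neg_ec_add[OF on_curve_ec_nmul[OF oP b_nz] on_curve_ec_nmul[OF oP b_nz] b_nz]
    by (simp add: ec_smul_def)
qed

definition ec_lincomb :: "rat \<Rightarrow> int list \<Rightarrow> ec_pt list \<Rightarrow> ec_pt" where
  "ec_lincomb b ns Ps = ec_sum 0 b (map2 (ec_smul 0 b) ns Ps)"

lemma ec_lincomb_Cons: "ec_lincomb b (n#ns) (P#Ps) = ec_add 0 b (ec_smul 0 b n P) (ec_lincomb b ns Ps)"
  by (simp add: ec_lincomb_def ec_sum_def)

lemma ec_lincomb_Nil1: "ec_lincomb b [] Ps = Inf" by (simp add: ec_lincomb_def ec_sum_def)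
lemma ec_lincomb_Nil2: "ec_lincomb b ns [] = Inf" by (simp add: ec_lincomb_def ec_sum_def)

lemma on_curve_ec_lincomb: "\<forall>P\<in>set Ps. on_curve 0 b P \<Longrightarrow> b \<noteq> 0 \<Longrightarrow> on_curve 0 b (ec_lincomb b ns Ps)"
proof (induction ns arbitrary: Ps)
  case Nil then show ?case by (simp add: ec_lincomb_Nil1)
next
  case (Cons n ns)
  then show ?case by (cases Ps) (auto simp: ec_lincomb_Cons ec_lincomb_Nil2 intro!: on_curve_ec_add on_curve_ec_smul)
qed

lemma ec_add_doubles:
  assumes oa: "on_curve 0 b a" and os: "on_curve 0 b s" and b_nz: "b \<noteq> 0"
  shows "ec_add 0 b (ec_add 0 b a a) (ec_add 0 b s s) = ec_add 0 b (ec_add 0 b a s) (ec_add 0 b a s)"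
proof -
  have cl: "\<And>A B. on_curve 0 b A \<Longrightarrow> on_curve 0 b B \<Longrightarrow> on_curve 0 b (ec_add 0 b A B)"
    using on_curve_ec_add b_nz by blast
  have "ec_add 0 b (ec_add 0 b a s) (ec_add 0 b a s) = ec_add 0 b a (ec_add 0 b s (ec_add 0 b a s))"
    using ec_add_assoc[OF oa os cl[OF oa os] b_nz] by simp
  also have "ec_add 0 b s (ec_add 0 b a s) = ec_add 0 b (ec_add 0 b s a) s"
    using ec_add_assoc[OF os oa os b_nz] by simp
  also have "ec_add 0 b s a = ec_add 0 b a s" using ec_add_commute[OF os oa b_nz] .
  also have "ec_add 0 b (ec_add 0 b a s) s = ec_add 0 b a (ec_add 0 b s s)"
    using ec_add_assoc[OF oa os os b_nz] by simp
  also have "ec_add 0 b a (ec_add 0 b a (ec_add 0 b s s)) = ec_add 0 b (ec_add 0 b a a) (ec_add 0 b s s)"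
    using ec_add_assoc[OF oa oa cl[OF os os] b_nz] by simp
  finally show ?thesis by simp
qed

lemma ec_lincomb_double:
  "\<forall>P\<in>set Ps. on_curve 0 b P \<Longrightarrow> b \<noteq> 0 \<Longrightarrow>
   ec_lincomb b (map (\<lambda>n. 2*n) ns) Ps = ec_add 0 b (ec_lincomb b ns Ps) (ec_lincomb b ns Ps)"
proof (induction ns arbitrary: Ps)
  case Nil then show ?case by (simp add: ec_lincomb_Nil1)
next
  case (Cons n ns)
  show ?case
  proof (cases Ps)
    case Nil then show ?thesis by (simp add: ec_lincomb_Nil2)
  next
    case (Cons P Ps')
    have oP: "on_curve 0 b P" and oPs: "\<forall>P\<in>set Ps'. on_curve 0 b P" using Cons.prems Cons by auto
    have IH: "ec_lincomb b (map (\<lambda>n. 2*n) ns) Ps' = ec_add 0 b (ec_lincomb b ns Ps') (ec_lincomb b ns Ps')"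
      using Cons.IH[OF oPs Cons.prems(2)] .
    show ?thesis
      using Cons IH ec_smul_double[OF oP Cons.prems(2)]
        ec_add_doubles[OF on_curve_ec_smul[OF oP Cons.prems(2)] on_curve_ec_lincomb[OF oPs Cons.prems(2)] Cons.prems(2)]
      by (simp add: ec_lincomb_Cons)
  qed
qed

lemma character_ec_nmul:
  assumes hom: "\<And>A B. on_curve 0 b A \<Longrightarrow> on_curve 0 b B \<Longrightarrow> \<psi> (ec_add 0 b A B) = \<psi> A * \<psi> B"
    and one: "\<psi> Inf = 1" and oP: "on_curve 0 b P" and b_nz: "b \<noteq> 0"
  shows "\<psi> (ec_nmul 0 b n P) = \<psi> P ^ n"
  by (induction n) (simp_all add: one hom oP on_curve_ec_nmul[OF oP b_nz])

lemma character_ec_smul: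
  assumes hom: "\<And>A B. on_curve 0 b A \<Longrightarrow> on_curve 0 b B \<Longrightarrow> \<psi> (ec_add 0 b A B) = \<psi> A * \<psi> B"
    and one: "\<psi> Inf = 1" and neg: "\<And>A. \<psi> (ec_neg A) = \<psi> A" and oP: "on_curve 0 b P" and b_nz: "b \<noteq> 0"
  shows "\<psi> (ec_smul 0 b n P) = \<psi> P ^ nat \<bar>n\<bar>"
  using character_ec_nmul[OF hom one oP b_nz] neg by (simp add: ec_smul_def)

lemma character_ec_lincomb:
  assumes hom: "\<And>A B. on_curve 0 b A \<Longrightarrow> on_curve 0 b B \<Longrightarrow> \<psi> (ec_add 0 b A B) = \<psi> A * \<psi> B"
    and one: "\<psi> Inf = 1" and neg: "\<And>A. \<psi> (ec_neg A) = \<psi> A" and b_nz: "b \<noteq> 0"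
    and "length ns = length Ps" and "\<forall>P\<in>set Ps. on_curve 0 b P"
  shows "\<psi> (ec_lincomb b ns Ps) = (\<Prod>k<length Ps. \<psi> (Ps!k) ^ nat \<bar>ns!k\<bar>)"
  using assms(5,6)
proof (induction ns Ps rule: list_induct2)
  case Nil
  then show ?case by (simp add: ec_lincomb_Nil1 one)
next
  case (Cons n ns P Ps)
  then show ?case
    by (simp add: ec_lincomb_Cons hom on_curve_ec_smul on_curve_ec_lincomb b_nz prod.lessThan_Suc_shift
        character_ec_smul[OF hom one neg _ b_nz] del: prod.lessThan_Suc)
qed

lemma Legendre_cong:
  assumes "[a = b] (mod m)" shows "Legendre a m = Legendre b m"
proof -
  have z: "[a = 0] (mod m) \<longleftrightarrow> [b = 0] (mod m)"
    using assms cong_sym cong_trans by blast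
  have q: "QuadRes m a \<longleftrightarrow> QuadRes m b"
    using assms cong_sym cong_trans unfolding QuadRes_def by blast
  show ?thesis using z q by (simp add: Legendre_def)
qed

lemma Legendre_vals: "Legendre a m \<in> {-1, 0, 1}"
  by (auto simp: Legendre_def)

lemma Legendre_mult:
  assumes prime_p: "prime p" and p_gt_2: "2 < p"
  shows "Legendre (a*b) (int p) = Legendre a (int p) * Legendre b (int p)"
proof -
  let ?e = "(p - 1) div 2"
  have "[Legendre (a*b) (int p) = (a*b) ^ ?e] (mod (int p))" by (rule euler_criterion[OF prime_p p_gt_2])
  moreover have "[(a*b) ^ ?e = a ^ ?e * b ^ ?e] (mod (int p))" by (simp add: power_mult_distrib)
  moreover have "[a ^ ?e * b ^ ?e = Legendre a (int p) * Legendre b (int p)] (mod (int p))"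
    using euler_criterion[OF prime_p p_gt_2, of a] euler_criterion[OF prime_p p_gt_2, of b] cong_mult cong_sym by blast
  ultimately have c: "[Legendre (a*b) (int p) = Legendre a (int p) * Legendre b (int p)] (mod (int p))"
    using cong_trans by blast
  have v1: "Legendre (a*b) (int p) \<in> {-1,0,1}" and v2: "Legendre a (int p) * Legendre b (int p) \<in> {-1,0,1}"
    using Legendre_vals[of "a*b" "int p"] Legendre_vals[of a "int p"] Legendre_vals[of b "int p"] by auto
  have d: "int p dvd (Legendre (a*b) (int p) - Legendre a (int p) * Legendre b (int p))"
    using c by (simp add: cong_iff_dvd_diff dvd_diff_commute)
  have p_ge_3: "int p \<ge> 3" using p_gt_2 by simp
  show ?thesis
  proof (rule ccontr)
    assume ne: "Legendre (a*b) (int p) \<noteq> Legendre a (int p) * Legendre b (int p)"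
    let ?d = "Legendre (a*b) (int p) - Legendre a (int p) * Legendre b (int p)"
    have "?d \<noteq> 0" using ne by simp
    moreover have "\<bar>?d\<bar> \<le> 2" using v1 v2 by auto
    ultimately have lt: "\<bar>?d\<bar> < int p" using p_ge_3 by simp
    have "\<bar>int p\<bar> \<le> \<bar>?d\<bar>" by (rule dvd_imp_le_int[OF \<open>?d \<noteq> 0\<close> d])
    then show False using lt by simp
  qed
qed

lemma line_meets_curve_identity:
  fixes x1 x2 x3 l nu b :: rat
  assumes "x1 + x2 + x3 = l^2" "x1*x2 + x1*x3 + x2*x3 = -2*l*nu" "x1*x2*x3 = nu^2 - b"
  shows "(l*x1 + nu)^2 = x1^3 + b"
  using assms by Groebner_Basis.algebra

lemma line_meets_root_identity:
  fixes x1 x2 x3 l nu b r :: rat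
  assumes "x1 + x2 + x3 = l^2" "x1*x2 + x1*x3 + x2*x3 = -2*l*nu" "x1*x2*x3 = nu^2 - b"
  shows "(x1 - r)*(x2 - r)*(x3 - r) = (l*r + nu)^2 - (r ^ 3 + b)"
  using assms by Groebner_Basis.algebra

lemma line_meets_root_identity2:
  fixes x1 x2 x3 l nu r :: rat
  assumes "x1 + x2 + x3 = l^2" "x1*x2 + x1*x3 + x2*x3 = -2*l*nu"
  shows "(x1 - r)*(x2 - r) - 3 * r ^ 2 = (x3 - r)*(x3 + 2*r + l^2) - 2*l*(l*x3 + nu)"
  using assms by Groebner_Basis.algebra

lemma line_meets_inverse_identity:
  fixes x1 x2 x3 l nu b u w :: rat
  assumes "x1 + x2 + x3 = l^2" "x1*x2 + x1*x3 + x2*x3 = -2*l*nu" "x1*x2*x3 = nu^2 - b"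
    "x1 * u = 1" "x2 * w = 1"
  shows "u + w + x3*u*w = l^2*u*w" "1 + x3*(u + w) = -2*l*nu*u*w" "x3 + b*u*w = nu^2*u*w"
  using assms by Groebner_Basis.algebra+

lemma chord_slope_line_identity:
  fixes x1 x2 y1 l b :: rat
  assumes "2*l*y1 + l^2*(x2 - x1) = x1^2 + x1*x2 + x2^2" "y1^2 = x1^3 + b"
  shows "x1*x2 + x1*(l^2 - x1 - x2) + x2*(l^2 - x1 - x2) = -2*l*(y1 - l*x1)"
    "x1*x2*(l^2 - x1 - x2) = (y1 - l*x1)^2 - b"
  using assms by Groebner_Basis.algebra+

locale prime_gt_3 =
  fixes p :: nat
  assumes prime_p: "prime p" and p_gt_3: "3 < p"
begin

definition p_integral :: "rat \<Rightarrow> bool" where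
  "p_integral q \<longleftrightarrow> (\<exists>a d. \<not> int p dvd d \<and> q = of_int a / of_int d)"

definition p_divisible :: "rat \<Rightarrow> bool" where
  "p_divisible q \<longleftrightarrow> (\<exists>a d. \<not> int p dvd d \<and> int p dvd a \<and> q = of_int a / of_int d)"

lemma prime_int_p: "prime (int p)" using prime_p by simp

lemma p_not_dvd_1: "\<not> int p dvd 1" using p_gt_3 by simp

lemma p_dvd_mult: "int p dvd a * b \<Longrightarrow> int p dvd a \<or> int p dvd b"
  using prime_int_p prime_dvd_mult_iff by blast

lemma p_integral_frac: "\<not> int p dvd d \<Longrightarrow> p_integral (of_int a / of_int d)"
  by (auto simp: p_integral_def)

lemma p_integral_of_int[simp]: "p_integral (of_int a)"
  using p_integral_frac[of 1 a] p_not_dvd_1 by simp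

lemma p_integral_numeral[simp]: "p_integral (numeral n)" "p_integral 0" "p_integral 1"
  using p_integral_of_int[of "numeral n"] p_integral_of_int[of 0] p_integral_of_int[of 1] by simp_all

lemma p_divisible_imp_p_integral: "p_divisible q \<Longrightarrow> p_integral q"
  by (auto simp: p_divisible_def p_integral_def)

lemma p_integral_add: "p_integral q1 \<Longrightarrow> p_integral q2 \<Longrightarrow> p_integral (q1 + q2)"
proof -
  assume "p_integral q1" "p_integral q2"
  then obtain a d a' d' where "\<not> int p dvd d" "q1 = of_int a / of_int d" "\<not> int p dvd d'" "q2 = of_int a' / of_int d'"
    by (auto simp: p_integral_def)
  moreover have "d \<noteq> 0" "d' \<noteq> 0" using calculation by auto
  ultimately show ?thesis unfolding p_integral_def
    by (intro exI[of _ "a*d' + a'*d"] exI[of _ "d*d'"]) (auto simp: field_simps dest: p_dvd_mult)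
qed

lemma p_integral_mult: "p_integral q1 \<Longrightarrow> p_integral q2 \<Longrightarrow> p_integral (q1 * q2)"
proof -
  assume "p_integral q1" "p_integral q2"
  then obtain a d a' d' where "\<not> int p dvd d" "q1 = of_int a / of_int d" "\<not> int p dvd d'" "q2 = of_int a' / of_int d'"
    by (auto simp: p_integral_def)
  then show ?thesis unfolding p_integral_def
    by (intro exI[of _ "a*a'"] exI[of _ "d*d'"]) (auto dest: p_dvd_mult)
qed

lemma p_integral_uminus: "p_integral q \<Longrightarrow> p_integral (- q)"
proof -
  assume "p_integral q"
  then obtain a d where "\<not> int p dvd d" "q = of_int a / of_int d" by (auto simp: p_integral_def)
  then show ?thesis unfolding p_integral_def by (intro exI[of _ "-a"] exI[of _ d]) simp
qed

lemma p_integral_diff: "p_integral q1 \<Longrightarrow> p_integral q2 \<Longrightarrow> p_integral (q1 - q2)"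
  using p_integral_add[of q1 "- q2"] p_integral_uminus by simp

lemma p_integral_power: "p_integral q \<Longrightarrow> p_integral (q ^ n)"
  by (induction n) (auto intro: p_integral_mult)

lemma p_divisible_add: "p_divisible q1 \<Longrightarrow> p_divisible q2 \<Longrightarrow> p_divisible (q1 + q2)"
proof -
  assume "p_divisible q1" "p_divisible q2"
  then obtain a d a' d' where h: "\<not> int p dvd d" "int p dvd a" "q1 = of_int a / of_int d" "\<not> int p dvd d'" "int p dvd a'" "q2 = of_int a' / of_int d'"
    by (auto simp: p_divisible_def)
  moreover have "d \<noteq> 0" "d' \<noteq> 0" using calculation by auto
  ultimately show ?thesis unfolding p_divisible_def
    by (intro exI[of _ "a*d' + a'*d"] exI[of _ "d*d'"]) (auto simp: field_simps dest: p_dvd_mult)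
qed

lemma p_divisible_mult_right: "p_divisible q1 \<Longrightarrow> p_integral q2 \<Longrightarrow> p_divisible (q1 * q2)"
proof -
  assume "p_divisible q1" "p_integral q2"
  then obtain a d a' d' where "\<not> int p dvd d" "int p dvd a" "q1 = of_int a / of_int d" "\<not> int p dvd d'" "q2 = of_int a' / of_int d'"
    by (auto simp: p_divisible_def p_integral_def)
  then show ?thesis unfolding p_divisible_def
    by (intro exI[of _ "a*a'"] exI[of _ "d*d'"]) (auto dest: p_dvd_mult)
qed

lemma p_divisible_mult_left: "p_integral q1 \<Longrightarrow> p_divisible q2 \<Longrightarrow> p_divisible (q1 * q2)"
  using p_divisible_mult_right[of q2 q1] by (simp add: mult.commute)

lemma p_divisible_uminus: "p_divisible q \<Longrightarrow> p_divisible (- q)"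
proof -
  assume "p_divisible q"
  then obtain a d where "\<not> int p dvd d" "int p dvd a" "q = of_int a / of_int d" by (auto simp: p_divisible_def)
  then show ?thesis unfolding p_divisible_def by (intro exI[of _ "-a"] exI[of _ d]) simp
qed

lemma p_divisible_diff: "p_divisible q1 \<Longrightarrow> p_divisible q2 \<Longrightarrow> p_divisible (q1 - q2)"
  using p_divisible_add[of q1 "- q2"] p_divisible_uminus by simp

lemma p_divisible_frac: "\<not> int p dvd d \<Longrightarrow> p_divisible (of_int a / of_int d) \<longleftrightarrow> int p dvd a"
proof
  assume nd: "\<not> int p dvd d" and "p_divisible (of_int a / of_int d)"
  then obtain a' d' where h: "\<not> int p dvd d'" "int p dvd a'" "of_int a / of_int d = (of_int a' / of_int d' :: rat)"
    by (auto simp: p_divisible_def)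
  have "d \<noteq> 0" "d' \<noteq> 0" using nd h by auto
  then have "of_int (a * d') = (of_int (a' * d) :: rat)" using h(3) by (simp add: field_simps)
  then have e: "a * d' = a' * d" by (simp only: of_int_eq_iff)
  have "int p dvd a * d'" unfolding e using h(2) by simp
  then show "int p dvd a" using h(1) p_dvd_mult by blast
next
  assume "\<not> int p dvd d" "int p dvd a"
  then show "p_divisible (of_int a / of_int d)" by (auto simp: p_divisible_def)
qed

lemma p_divisible_of_int: "p_divisible (of_int a) \<longleftrightarrow> int p dvd a"
  using p_divisible_frac[of 1 a] p_not_dvd_1 by simp

lemma not_p_integral_frac:
  assumes "int p dvd d" "\<not> int p dvd a" "d \<noteq> 0" shows "\<not> p_integral (of_int a / of_int d)"
proof
  assume "p_integral (of_int a / of_int d)"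
  then obtain a' d' where h: "\<not> int p dvd d'" "of_int a / of_int d = (of_int a' / of_int d' :: rat)"
    by (auto simp: p_integral_def)
  have "d' \<noteq> 0" using h by auto
  then have "of_int (a * d') = (of_int (a' * d) :: rat)" using h(2) assms(3) by (simp add: field_simps)
  then have e: "a * d' = a' * d" by (simp only: of_int_eq_iff)
  have "int p dvd a * d'" unfolding e using assms(1) by simp
  then show False using h(1) assms(2) p_dvd_mult by blast
qed

lemma p_divisible_0[simp]: "p_divisible 0"
  using p_divisible_of_int[of 0] by simp

lemma not_p_divisible_1[simp]: "\<not> p_divisible 1"
  using p_divisible_of_int[of 1] p_not_dvd_1 by simp

lemma p_divisible_mult_cases: "p_integral q1 \<Longrightarrow> p_integral q2 \<Longrightarrow> p_divisible (q1 * q2) \<Longrightarrow> p_divisible q1 \<or> p_divisible q2"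
proof -
  assume "p_integral q1" "p_integral q2" "p_divisible (q1 * q2)"
  then obtain a d a' d' where h: "\<not> int p dvd d" "q1 = of_int a / of_int d" "\<not> int p dvd d'" "q2 = of_int a' / of_int d'"
    by (auto simp: p_integral_def)
  have nd: "\<not> int p dvd d * d'" using h p_dvd_mult by blast
  have e: "q1 * q2 = of_int (a*a') / of_int (d*d')" using h by simp
  have "p_divisible (of_int (a*a') / of_int (d*d'))" using \<open>p_divisible (q1 * q2)\<close> by (simp only: e)
  then have "int p dvd a * a'" by (simp only: p_divisible_frac[OF nd])
  then have "int p dvd a \<or> int p dvd a'" by (rule p_dvd_mult)
  then show ?thesis using h p_divisible_frac by auto
qed

lemma not_p_divisible_mult: "p_integral q1 \<Longrightarrow> p_integral q2 \<Longrightarrow> \<not> p_divisible q1 \<Longrightarrow> \<not> p_divisible q2 \<Longrightarrow> \<not> p_divisible (q1 * q2)"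
  using p_divisible_mult_cases by blast

lemma p_divisible_inverse:
  assumes "\<not> p_integral q" shows "p_divisible (inverse q)"
proof -
  obtain a d where qd: "quotient_of q = (a, d)" by (cases "quotient_of q") auto
  have q: "q = of_int a / of_int d" using quotient_of_div[OF qd] .
  have dpos: "d > 0" using quotient_of_denom_pos[OF qd] .
  have cop: "coprime a d" using quotient_of_coprime[OF qd] .
  have pd: "int p dvd d" using assms q p_integral_frac by blast
  have pa: "\<not> int p dvd a"
  proof
    assume "int p dvd a"
    then have "int p dvd gcd a d" using pd by simp
    then show False using cop p_not_dvd_1 by simp
  qed
  have "inverse q = of_int d / of_int a" using q by simp
  then show ?thesis using pa pd by (auto simp: p_divisible_def)
qed

lemma p_integral_square_imp: assumes "p_integral (q^2)" shows "p_integral q"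
proof (rule ccontr)
  assume n: "\<not> p_integral q"
  then have "q \<noteq> 0" by auto
  have "p_divisible (inverse q)" using p_divisible_inverse[OF n] .
  then have "p_divisible (inverse q * inverse q)" using p_divisible_imp_p_integral p_divisible_mult_right by blast
  then have "p_divisible ((inverse q * inverse q) * q^2)" using assms by (rule p_divisible_mult_right)
  moreover have "(inverse q * inverse q) * q^2 = 1" using \<open>q \<noteq> 0\<close> by (simp add: field_simps power2_eq_square)
  ultimately show False by simp
qed

lemma p_divisible_square_imp: assumes "p_integral q" "p_divisible (q^2)" shows "p_divisible q"
  using p_divisible_mult_cases[OF assms(1) assms(1)] assms(2) by (simp add: power2_eq_square)

lemma p_integral_residue:
  assumes "p_integral q" shows "\<exists>t::int. p_divisible (q - of_int t)"
proof -
  obtain a d where h: "\<not> int p dvd d" "q = of_int a / of_int d" using assms by (auto simp: p_integral_def)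
  have "coprime (int p) d" using h(1) prime_int_p by (simp add: prime_imp_coprime)
  then obtain u v where uv: "u * int p + v * d = 1"
    by (metis bezout_int gcd.commute coprime_iff_gcd_eq_1 mult.commute)
  have "d \<noteq> 0" using h by auto
  have "q - of_int (a*v) = of_int (a - a*v*d) / of_int d" using h \<open>d \<noteq> 0\<close> by (simp add: field_simps)
  moreover have "a - a*v*d = a*u*int p"
  proof -
    have "a = a * (u * int p + v * d)" using uv by simp
    then show ?thesis by (simp add: algebra_simps)
  qed
  ultimately have "p_divisible (q - of_int (a*v))" using h(1) p_divisible_frac[of d "a*u*int p"] by simp
  then show ?thesis by blast
qed


text \<open>Meaningful only for \<open>p\<close>-integral \<open>q\<close>; otherwise the choice is unconstrained.\<close>
definition res_legendre :: "rat \<Rightarrow> int" where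
  "res_legendre q = Legendre (SOME t. p_divisible (q - of_int t)) (int p)"

lemma p_divisible_of_int_diff_cong: "p_divisible (of_int t1 - of_int t2) \<Longrightarrow> [t1 = t2] (mod int p)"
proof -
  assume "p_divisible (of_int t1 - of_int t2)"
  then have "p_divisible (of_int (t1 - t2))" by simp
  then have "int p dvd (t1 - t2)" by (simp only: p_divisible_of_int)
  then show ?thesis by (simp add: cong_iff_dvd_diff)
qed

lemma res_legendre_eq: assumes "p_divisible (q - of_int t)" shows "res_legendre q = Legendre t (int p)"
proof -
  have ex: "\<exists>t. p_divisible (q - of_int t)" using assms by blast
  define s where "s = (SOME t. p_divisible (q - of_int t))"
  have hs: "p_divisible (q - of_int s)" unfolding s_def using someI_ex[OF ex] .
  have "p_divisible ((q - of_int s) - (q - of_int t))" using p_divisible_diff[OF hs assms] .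
  then have "p_divisible (of_int t - of_int s)" by simp
  then have "[t = s] (mod int p)" by (rule p_divisible_of_int_diff_cong)
  then show ?thesis unfolding res_legendre_def s_def[symmetric] using Legendre_cong by metis
qed

lemma res_legendre_cong: assumes "p_integral q1" "p_divisible (q1 - q2)" shows "res_legendre q1 = res_legendre q2"
proof -
  obtain t where t: "p_divisible (q1 - of_int t)" using p_integral_residue[OF assms(1)] by blast
  have "p_divisible ((q1 - of_int t) - (q1 - q2))" using p_divisible_diff[OF t assms(2)] .
  then have "p_divisible (q2 - of_int t)" by simp
  then show ?thesis using res_legendre_eq t by simp
qed

lemma p_gt_2: "2 < p" using p_gt_3 by simp

lemma not_dvd_three_square:
  assumes "\<not> int p dvd r" shows "\<not> int p dvd 3 * r^2"
proof -
  have "\<not> int p dvd 3"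
  proof
    assume "int p dvd 3"
    then have "int p \<le> 3" by (rule zdvd_imp_le) simp
    then show False using p_gt_3 by simp
  qed
  then show ?thesis using assms p_dvd_mult by (simp add: power2_eq_square) blast
qed

lemma res_legendre_mult: assumes "p_integral q1" "p_integral q2" shows "res_legendre (q1*q2) = res_legendre q1 * res_legendre q2"
proof -
  obtain t1 where t1: "p_divisible (q1 - of_int t1)" using p_integral_residue[OF assms(1)] by blast
  obtain t2 where t2: "p_divisible (q2 - of_int t2)" using p_integral_residue[OF assms(2)] by blast
  have "p_divisible (q1 * (q2 - of_int t2) + (q1 - of_int t1) * of_int t2)"
    by (rule p_divisible_add[OF p_divisible_mult_left[OF assms(1) t2] p_divisible_mult_right[OF t1 p_integral_of_int]])
  then have "p_divisible (q1*q2 - of_int (t1*t2))" by (simp add: algebra_simps)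
  then have "res_legendre (q1*q2) = Legendre (t1*t2) (int p)" by (rule res_legendre_eq)
  also have "\<dots> = Legendre t1 (int p) * Legendre t2 (int p)" by (rule Legendre_mult[OF prime_p p_gt_2])
  finally show ?thesis using res_legendre_eq[OF t1] res_legendre_eq[OF t2] by simp
qed

lemma res_legendre_unit: assumes "p_integral q" "\<not> p_divisible q" shows "res_legendre q = 1 \<or> res_legendre q = -1"
proof -
  obtain t where t: "p_divisible (q - of_int t)" using p_integral_residue[OF assms(1)] by blast
  have nt: "\<not> int p dvd t"
  proof
    assume "int p dvd t"
    then have "p_divisible (of_int t)" by (simp add: p_divisible_of_int)
    then have "p_divisible ((q - of_int t) + of_int t)" using p_divisible_add[OF t] by blast
    then show False using assms(2) by simp
  qed
  have "\<not> [t = 0] (mod int p)" using nt by (simp add: cong_0_iff)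
  then show ?thesis using res_legendre_eq[OF t] by (auto simp: Legendre_def)
qed

lemma res_legendre_square: assumes "p_integral q" "\<not> p_divisible q" shows "res_legendre (q^2) = 1"
  using res_legendre_mult[OF assms(1) assms(1)] res_legendre_unit[OF assms] by (auto simp: power2_eq_square)

lemma res_legendre_frac: assumes nd: "\<not> int p dvd d" shows "res_legendre (of_int a / of_int d) = Legendre (a*d) (int p)"
proof -
  have "p_integral (of_int a / of_int d)" using p_integral_frac[OF nd] .
  then obtain t where t: "p_divisible (of_int a / of_int d - of_int t)" using p_integral_residue by blast
  have "d \<noteq> 0" using nd by auto
  then have e: "of_int a / of_int d - of_int t = (of_int (a - t*d) / of_int d :: rat)" by (simp add: field_simps)
  have "p_divisible (of_int (a - t*d) / of_int d)" using t by (simp only: e)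
  then have "int p dvd (a - t*d)" by (simp only: p_divisible_frac[OF nd])
  then have c: "[a*d = t*(d*d)] (mod int p)"
    by (simp add: cong_iff_dvd_diff algebra_simps) (metis dvd_mult2 mult.commute right_diff_distrib)
  have "Legendre (d*d) (int p) = 1"
  proof -
    have "\<not> [d*d = 0] (mod int p)" using nd p_dvd_mult by (simp add: cong_0_iff) blast
    moreover have "QuadRes (int p) (d*d)" unfolding QuadRes_def by (rule exI[of _ d]) (simp add: power2_eq_square)
    ultimately show ?thesis by (simp add: Legendre_def)
  qed
  then have "Legendre (a*d) (int p) = Legendre t (int p)"
    using Legendre_cong[OF c] Legendre_mult[OF prime_p p_gt_2, of t "d*d"] by simp
  then show ?thesis using res_legendre_eq[OF t] by simp
qed

text \<open>For \<open>x = r mod p\<close> the factor \<open>x - r\<close> is replaced by \<open>3 r\<^sup>2\<close>, the value at \<open>r\<close> of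
  \<open>(x\<^sup>3 + b) / (x - r)\<close>, whose product with \<open>x - r\<close> is the square \<open>y\<^sup>2\<close> modulo \<open>p\<close>.\<close>
definition descent_sign_x :: "int \<Rightarrow> rat \<Rightarrow> int" where
  "descent_sign_x r x =
     (if p_integral x then
        if p_divisible (x - of_int r) then res_legendre (3 * of_int r ^ 2) else res_legendre (x - of_int r)
      else 1)"

end

definition descent_sign :: "nat \<Rightarrow> int \<Rightarrow> ec_pt \<Rightarrow> int" where
  "descent_sign p r P = (case P of Inf \<Rightarrow> 1 | Aff x y \<Rightarrow> prime_gt_3.descent_sign_x p r x)"

lemma descent_sign_Inf[simp]: "descent_sign p r Inf = 1" by (simp add: descent_sign_def)
lemma descent_sign_Aff[simp]: "descent_sign p r (Aff x y) = prime_gt_3.descent_sign_x p r x" by (simp add: descent_sign_def)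
lemma descent_sign_ec_neg: "descent_sign p r (ec_neg P) = descent_sign p r P" by (cases P) auto

locale root_mod_prime = prime_gt_3 +
  fixes b :: rat and r :: int
  assumes b_p_integral: "p_integral b" and b_nz: "b \<noteq> 0"
    and r_root: "p_divisible (of_int r ^ 3 + b)" and p_not_dvd_r: "\<not> int p dvd r"
begin

lemma three_r_square_unit: "p_integral (3 * of_int r ^ 2)" "\<not> p_divisible (3 * of_int r ^ 2)"
proof -
  show "p_integral (3 * of_int r ^ 2)" by (simp add: p_integral_mult p_integral_power)
  have "\<not> p_divisible (of_int (3 * r^2))"
    unfolding p_divisible_of_int using p_not_dvd_r by (rule not_dvd_three_square)
  then show "\<not> p_divisible (3 * of_int r ^ 2)" by simp
qed

lemma descent_sign_x_cases: "descent_sign_x r x = 1 \<or> descent_sign_x r x = -1"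
proof -
  have "p_integral x \<Longrightarrow> \<not> p_divisible (x - of_int r) \<Longrightarrow> res_legendre (x - of_int r) = 1 \<or> res_legendre (x - of_int r) = -1"
    by (rule res_legendre_unit) (auto intro: p_integral_diff)
  then show ?thesis using res_legendre_unit[OF three_r_square_unit] by (auto simp: descent_sign_x_def)
qed

lemma descent_sign_x_square: "descent_sign_x r x * descent_sign_x r x = 1"
  using descent_sign_x_cases[of x] by auto

lemma descent_sign_x_cong: assumes "p_integral x1" "p_divisible (x1 - x2)" shows "descent_sign_x r x1 = descent_sign_x r x2"
proof -
  have i2: "p_integral x2" using p_integral_diff[OF assms(1) p_divisible_imp_p_integral[OF assms(2)]] by simp
  have e: "x2 - of_int r = (x1 - of_int r) - (x1 - x2)" by simp
  have m: "p_divisible (x1 - of_int r) \<longleftrightarrow> p_divisible (x2 - of_int r)"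
  proof
    assume "p_divisible (x1 - of_int r)" then show "p_divisible (x2 - of_int r)" unfolding e using p_divisible_diff assms(2) by blast
  next
    assume "p_divisible (x2 - of_int r)"
    moreover have "x1 - of_int r = (x2 - of_int r) + (x1 - x2)" by simp
    ultimately show "p_divisible (x1 - of_int r)" using p_divisible_add assms(2) by metis
  qed
  have "res_legendre (x1 - of_int r) = res_legendre (x2 - of_int r)"
  proof (rule res_legendre_cong)
    show "p_integral (x1 - of_int r)" using assms(1) by (simp add: p_integral_diff)
    show "p_divisible (x1 - of_int r - (x2 - of_int r))" using assms(2) by simp
  qed
  then show ?thesis using assms(1) i2 m by (simp add: descent_sign_x_def)
qed

text \<open>Vieta: \<open>x1, x2, x3\<close> are the roots of \<open>x\<^sup>3 + b - (l x + nu)\<^sup>2\<close>, the \<open>x\<close>-coordinates of the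
  three intersections of the line \<open>y = l x + nu\<close> with the curve.\<close>
definition line_meets :: "rat \<Rightarrow> rat \<Rightarrow> rat \<Rightarrow> rat \<Rightarrow> rat \<Rightarrow> bool" where
  "line_meets l nu x1 x2 x3 \<longleftrightarrow> x1 + x2 + x3 = l^2 \<and> x1*x2 + x1*x3 + x2*x3 = -2*l*nu \<and> x1*x2*x3 = nu^2 - b"

lemma line_meets_swap12: "line_meets l nu x1 x2 x3 \<Longrightarrow> line_meets l nu x2 x1 x3"
  by (simp add: line_meets_def algebra_simps)

lemma line_meets_swap23: "line_meets l nu x1 x2 x3 \<Longrightarrow> line_meets l nu x1 x3 x2"
  by (simp add: line_meets_def algebra_simps)

lemma line_meets_on_curve: "line_meets l nu x1 x2 x3 \<Longrightarrow> (l*x1 + nu)^2 = x1^3 + b"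
  unfolding line_meets_def using line_meets_curve_identity by blast

lemma line_meets_p_integral: assumes "line_meets l nu x1 x2 x3" "p_integral x1" "p_integral x2" "p_integral x3" shows "p_integral l" "p_integral nu"
proof -
  have "l^2 = x1 + x2 + x3" using assms(1) by (simp add: line_meets_def)
  then have "p_integral (l^2)" using assms by (simp add: p_integral_add)
  then show "p_integral l" by (rule p_integral_square_imp)
  have "nu^2 = x1*x2*x3 + b" using assms(1) by (simp add: line_meets_def)
  then have "p_integral (nu^2)" using assms b_p_integral by (simp add: p_integral_add p_integral_mult)
  then show "p_integral nu" by (rule p_integral_square_imp)
qed

lemma line_meets_no_single_p_integral:
  assumes c: "line_meets l nu x1 x2 x3" and n1: "\<not> p_integral x1" and n2: "\<not> p_integral x2" and i3: "p_integral x3"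
  shows False
proof -
  have x1nz: "x1 \<noteq> 0" and x2nz: "x2 \<noteq> 0" using n1 n2 by auto
  define u w where "u = inverse x1" and "w = inverse x2"
  have pu: "p_divisible u" and pw: "p_divisible w" using p_divisible_inverse n1 n2 u_def w_def by auto
  have hu: "x1 * u = 1" and hw: "x2 * w = 1" using x1nz x2nz u_def w_def by simp_all
  have e1: "x1 + x2 + x3 = l^2" and e2: "x1*x2 + x1*x3 + x2*x3 = -2*l*nu" and e3: "x1*x2*x3 = nu^2 - b"
    using c by (auto simp: line_meets_def)
  define A B C where "A = u + w + x3*u*w" and "B = 1 + x3*(u + w)" and "C = x3 + b*u*w"
  have iu: "p_integral u" and iw: "p_integral w" using pu pw p_divisible_imp_p_integral by auto
  have pA: "p_divisible A" unfolding A_def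
    by (intro p_divisible_add pu pw p_divisible_mult_right[OF p_divisible_mult_left[OF i3 pu] iw])
  have iC: "p_integral C" unfolding C_def by (intro p_integral_add p_integral_mult i3 b_p_integral iu iw)
  have pB1: "p_divisible (B - 1)" unfolding B_def by (simp add: p_divisible_mult_left[OF i3 p_divisible_add[OF pu pw]])
  have iB: "p_integral B" using p_divisible_imp_p_integral[OF pB1] p_integral_add[of "B - 1" 1] by simp
  have nB: "\<not> p_divisible B"
  proof
    assume "p_divisible B"
    then have "p_divisible (B - (B - 1))" using p_divisible_diff pB1 by blast
    then show False by simp
  qed
  have hA: "A = l^2*u*w" and hB: "B = -2*l*nu*u*w" and hC: "C = nu^2*u*w"
    unfolding A_def B_def C_def using line_meets_inverse_identity[OF e1 e2 e3 hu hw] by simp_all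
  have "B * B = A * (4 * C)" unfolding hA hB hC by (simp add: algebra_simps power2_eq_square)
  moreover have "p_divisible (A * (4 * C))" by (rule p_divisible_mult_right[OF pA]) (simp add: p_integral_mult iC)
  ultimately have "p_divisible (B * B)" by simp
  then show False using not_p_divisible_mult[OF iB iB nB nB] by simp
qed

lemma line_meets_p_integral_pair_congruent:
  assumes c: "line_meets l nu x1 x2 x3" and i1: "p_integral x1" and i2: "p_integral x2" and n3: "\<not> p_integral x3"
  shows "p_divisible (x1 - x2)"
proof -
  have e1: "l^2 = x1 + x2 + x3" using c by (simp add: line_meets_def)
  have "\<not> p_integral (l^2)"
  proof
    assume "p_integral (l^2)"
    then have "p_integral (l^2 - x1 - x2)" using i1 i2 by (simp add: p_integral_diff)
    then show False using n3 e1 by simp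
  qed
  then have nl: "\<not> p_integral l" using p_integral_power by blast
  then have lnz: "l \<noteq> 0" by auto
  have pinv: "p_divisible (inverse l)" using p_divisible_inverse[OF nl] .
  have y1: "p_integral (l*x1 + nu)"
  proof (rule p_integral_square_imp)
    show "p_integral ((l*x1 + nu)^2)" unfolding line_meets_on_curve[OF c] by (simp add: p_integral_add p_integral_power i1 b_p_integral)
  qed
  have c2: "line_meets l nu x2 x1 x3" by (rule line_meets_swap12[OF c])
  have y2: "p_integral (l*x2 + nu)"
  proof (rule p_integral_square_imp)
    show "p_integral ((l*x2 + nu)^2)" unfolding line_meets_on_curve[OF c2] by (simp add: p_integral_add p_integral_power i2 b_p_integral)
  qed
  have "x1 - x2 = ((l*x1 + nu) - (l*x2 + nu)) * inverse l" using lnz by (simp add: field_simps)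
  moreover have "p_divisible (((l*x1 + nu) - (l*x2 + nu)) * inverse l)"
    by (rule p_divisible_mult_left[OF p_integral_diff[OF y1 y2] pinv])
  ultimately show ?thesis by simp
qed

lemma descent_sign_x_line_through_root:
  assumes c: "line_meets l nu x1 x2 x3" and i1: "p_integral x1" and i2: "p_integral x2" and i3: "p_integral x3"
    and m3: "p_divisible (x3 - of_int r)"
  shows "descent_sign_x r x1 * descent_sign_x r x2 * descent_sign_x r x3 = 1"
proof -
  have il: "p_integral l" and inu: "p_integral nu" using line_meets_p_integral[OF c i1 i2 i3] by auto
  have c3: "line_meets l nu x3 x2 x1" using line_meets_swap12[OF line_meets_swap23[OF line_meets_swap12[OF c]]] .
  have iy3: "p_integral (l*x3 + nu)" by (intro p_integral_add p_integral_mult il i3 inu)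
  have "(l*x3 + nu)^2 = (x3 - of_int r) * (x3^2 + x3 * of_int r + of_int r ^ 2) + (of_int r ^ 3 + b)"
    unfolding line_meets_on_curve[OF c3] by (simp add: algebra_simps power2_eq_square power3_eq_cube)
  moreover have "p_divisible ((x3 - of_int r) * (x3^2 + x3 * of_int r + of_int r ^ 2) + (of_int r ^ 3 + b))"
    by (intro p_divisible_add r_root p_divisible_mult_right m3 p_integral_add p_integral_mult p_integral_power i3 p_integral_of_int)
  ultimately have "p_divisible ((l*x3 + nu)^2)" by simp
  then have py3: "p_divisible (l*x3 + nu)" using p_divisible_square_imp[OF iy3] by blast
  have e1: "x1 + x2 + x3 = l^2" and e2: "x1*x2 + x1*x3 + x2*x3 = -2*l*nu" using c by (auto simp: line_meets_def)
  have ident: "(x1 - of_int r)*(x2 - of_int r) - 3 * of_int r ^ 2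
      = (x3 - of_int r)*(x3 + 2*of_int r + l^2) - 2*l*(l*x3 + nu)"
    using line_meets_root_identity2[OF e1 e2] .
  have i4: "p_integral (x3 + 2*of_int r + l^2)" by (intro p_integral_add p_integral_mult p_integral_power i3 p_integral_of_int il) simp
  have i5: "p_integral (2*l)" by (intro p_integral_mult il) simp
  have "p_divisible ((x3 - of_int r)*(x3 + 2*of_int r + l^2) - 2*l*(l*x3 + nu))"
    using p_divisible_diff[OF p_divisible_mult_right[OF m3 i4] p_divisible_mult_left[OF i5 py3]] by (simp add: mult.assoc)
  then have pd: "p_divisible ((x1 - of_int r)*(x2 - of_int r) - 3 * of_int r ^ 2)" using ident by simp
  have ipr: "p_integral ((x1 - of_int r)*(x2 - of_int r))" by (intro p_integral_mult p_integral_diff i1 i2 p_integral_of_int)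
  have nprod: "\<not> p_divisible ((x1 - of_int r)*(x2 - of_int r))"
  proof
    assume "p_divisible ((x1 - of_int r)*(x2 - of_int r))"
    then have "p_divisible ((x1 - of_int r)*(x2 - of_int r) - ((x1 - of_int r)*(x2 - of_int r) - 3 * of_int r ^ 2))"
      using p_divisible_diff pd by blast
    then show False using three_r_square_unit by simp
  qed
  have n1: "\<not> p_divisible (x1 - of_int r)"
  proof
    assume "p_divisible (x1 - of_int r)"
    then have "p_divisible ((x1 - of_int r)*(x2 - of_int r))" by (rule p_divisible_mult_right) (intro p_integral_diff i2 p_integral_of_int)
    then show False using nprod by simp
  qed
  have n2: "\<not> p_divisible (x2 - of_int r)"
  proof
    assume "p_divisible (x2 - of_int r)"
    then have "p_divisible ((x1 - of_int r)*(x2 - of_int r))" by (rule p_divisible_mult_left[rotated]) (intro p_integral_diff i1 p_integral_of_int)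
    then show False using nprod by simp
  qed
  have "descent_sign_x r x1 * descent_sign_x r x2 = res_legendre ((x1 - of_int r)*(x2 - of_int r))"
    using i1 i2 n1 n2 res_legendre_mult[of "x1 - of_int r" "x2 - of_int r"] by (simp add: descent_sign_x_def p_integral_diff)
  also have "\<dots> = res_legendre (3 * of_int r ^ 2)" by (rule res_legendre_cong[OF ipr pd])
  finally have "descent_sign_x r x1 * descent_sign_x r x2 * descent_sign_x r x3 = res_legendre (3 * of_int r ^ 2) * res_legendre (3 * of_int r ^ 2)"
    using i3 m3 by (simp add: descent_sign_x_def)
  then show ?thesis using res_legendre_unit[OF three_r_square_unit] by auto
qed

lemma descent_sign_x_line_units:
  assumes c: "line_meets l nu x1 x2 x3" and i1: "p_integral x1" and i2: "p_integral x2" and i3: "p_integral x3"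
    and n1: "\<not> p_divisible (x1 - of_int r)" and n2: "\<not> p_divisible (x2 - of_int r)" and n3: "\<not> p_divisible (x3 - of_int r)"
  shows "descent_sign_x r x1 * descent_sign_x r x2 * descent_sign_x r x3 = 1"
proof -
  have il: "p_integral l" and inu: "p_integral nu" using line_meets_p_integral[OF c i1 i2 i3] by auto
  have e1: "x1 + x2 + x3 = l^2" and e2: "x1*x2 + x1*x3 + x2*x3 = -2*l*nu" and e3: "x1*x2*x3 = nu^2 - b"
    using c by (auto simp: line_meets_def)
  define Pr where "Pr = (x1 - of_int r)*(x2 - of_int r)*(x3 - of_int r)"
  have ident: "Pr = (l*of_int r + nu)^2 - (of_int r ^ 3 + b)" unfolding Pr_def using line_meets_root_identity[OF e1 e2 e3] .
  have d1: "p_integral (x1 - of_int r)" "p_integral (x2 - of_int r)" "p_integral (x3 - of_int r)" using i1 i2 i3 by (auto intro: p_integral_diff)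
  have iPr: "p_integral Pr" unfolding Pr_def using d1 by (intro p_integral_mult)
  have nPr: "\<not> p_divisible Pr" unfolding Pr_def using d1 n1 n2 n3 by (intro not_p_divisible_mult p_integral_mult)
  have iq: "p_integral (l*of_int r + nu)" by (intro p_integral_add p_integral_mult il inu p_integral_of_int)
  have "Pr - (l*of_int r + nu)^2 = - (of_int r ^ 3 + b)" using ident by simp
  then have dq: "p_divisible (Pr - (l*of_int r + nu)^2)" using p_divisible_uminus[OF r_root] by simp
  have nq: "\<not> p_divisible (l*of_int r + nu)"
  proof
    assume "p_divisible (l*of_int r + nu)"
    then have "p_divisible ((l*of_int r + nu)^2)" by (simp add: power2_eq_square p_divisible_mult_right iq)
    then have "p_divisible (Pr - (l*of_int r + nu)^2 + (l*of_int r + nu)^2)" using p_divisible_add dq by blast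
    then show False using nPr by simp
  qed
  have "descent_sign_x r x1 * descent_sign_x r x2 * descent_sign_x r x3 = res_legendre Pr"
    using i1 i2 i3 n1 n2 n3 d1 unfolding Pr_def
    by (simp add: descent_sign_x_def res_legendre_mult p_integral_mult)
  also have "\<dots> = res_legendre ((l*of_int r + nu)^2)" by (rule res_legendre_cong[OF iPr dq])
  also have "\<dots> = 1" by (rule res_legendre_square[OF iq nq])
  finally show ?thesis .
qed

lemma descent_sign_x_not_p_integral: "\<not> p_integral x \<Longrightarrow> descent_sign_x r x = 1" by (simp add: descent_sign_x_def)

lemma descent_sign_x_line:
  assumes c: "line_meets l nu x1 x2 x3"
  shows "descent_sign_x r x1 * descent_sign_x r x2 * descent_sign_x r x3 = 1"
proof -
  have c213: "line_meets l nu x2 x1 x3" using line_meets_swap12[OF c] .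
  have c132: "line_meets l nu x1 x3 x2" using line_meets_swap23[OF c] .
  have c231: "line_meets l nu x2 x3 x1" using line_meets_swap23[OF c213] .
  have c312: "line_meets l nu x3 x1 x2" using line_meets_swap12[OF c132] .
  have c321: "line_meets l nu x3 x2 x1" using line_meets_swap12[OF c231] .
  consider (TTT) "p_integral x1" "p_integral x2" "p_integral x3" | (TTF) "p_integral x1" "p_integral x2" "\<not> p_integral x3"
    | (TFT) "p_integral x1" "\<not> p_integral x2" "p_integral x3" | (FTT) "\<not> p_integral x1" "p_integral x2" "p_integral x3"
    | (TFF) "p_integral x1" "\<not> p_integral x2" "\<not> p_integral x3" | (FTF) "\<not> p_integral x1" "p_integral x2" "\<not> p_integral x3"
    | (FFT) "\<not> p_integral x1" "\<not> p_integral x2" "p_integral x3" | (FFF) "\<not> p_integral x1" "\<not> p_integral x2" "\<not> p_integral x3"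
    by blast
  then show ?thesis
  proof cases
    case TTT
    show ?thesis
    proof (cases "p_divisible (x3 - of_int r)")
      case True then show ?thesis using descent_sign_x_line_through_root[OF c TTT True] by simp
    next
      case n3: False
      show ?thesis
      proof (cases "p_divisible (x1 - of_int r)")
        case True
        have "descent_sign_x r x2 * descent_sign_x r x3 * descent_sign_x r x1 = 1" using descent_sign_x_line_through_root[OF c231 TTT(2) TTT(3) TTT(1) True] .
        then show ?thesis by (simp add: algebra_simps)
      next
        case n1: False
        show ?thesis
        proof (cases "p_divisible (x2 - of_int r)")
          case True
          have "descent_sign_x r x1 * descent_sign_x r x3 * descent_sign_x r x2 = 1" using descent_sign_x_line_through_root[OF c132 TTT(1) TTT(3) TTT(2) True] .
          then show ?thesis by (simp add: algebra_simps)
        next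
          case False then show ?thesis using descent_sign_x_line_units[OF c TTT n1 False n3] by simp
        qed
      qed
    qed
  next
    case TTF
    have "descent_sign_x r x1 = descent_sign_x r x2" using descent_sign_x_cong line_meets_p_integral_pair_congruent[OF c TTF] TTF by blast
    then show ?thesis using descent_sign_x_square[of x2] descent_sign_x_not_p_integral[OF TTF(3)] by simp
  next
    case TFT
    have "descent_sign_x r x1 = descent_sign_x r x3" using descent_sign_x_cong line_meets_p_integral_pair_congruent[OF c132 TFT(1) TFT(3) TFT(2)] TFT by blast
    then show ?thesis using descent_sign_x_square[of x3] descent_sign_x_not_p_integral[OF TFT(2)] by simp
  next
    case FTT
    have "descent_sign_x r x2 = descent_sign_x r x3" using descent_sign_x_cong line_meets_p_integral_pair_congruent[OF c231 FTT(2) FTT(3) FTT(1)] FTT by blast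
    then show ?thesis using descent_sign_x_square[of x3] descent_sign_x_not_p_integral[OF FTT(1)] by simp
  next
    case TFF then show ?thesis using line_meets_no_single_p_integral[OF c231 TFF(2) TFF(3) TFF(1)] by simp
  next
    case FTF then show ?thesis using line_meets_no_single_p_integral[OF c132 FTF(1) FTF(3) FTF(2)] by simp
  next
    case FFT then show ?thesis using line_meets_no_single_p_integral[OF c FFT] by simp
  next
    case FFF then show ?thesis by (simp add: descent_sign_x_not_p_integral)
  qed
qed

lemma chord_slope_line_meets:
  assumes c1: "y1^2 = x1^3 + b" and s: "chord_slope x1 y1 x2 y2 l"
  shows "line_meets l (y1 - l*x1) x1 x2 (l^2 - x1 - x2)"
proof -
  have a: "y2 = y1 + l*(x2 - x1)" and R: "2*l*y1 + l^2*(x2 - x1) = x1^2 + x1*x2 + x2^2"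
    using s by (auto simp: chord_slope_def)
  note chord_slope_line_identity[OF R c1]
  then show ?thesis by (simp add: line_meets_def)
qed

lemma descent_sign_ec_add:
  assumes "on_curve 0 b P" and "on_curve 0 b Q"
  shows "descent_sign p r (ec_add 0 b P Q) = descent_sign p r P * descent_sign p r Q"
  using assms b_nz
proof (cases rule: ec_add_cases)
  case (opposite x y)
  then show ?thesis using descent_sign_x_square[of x] by simp
next
  case (chord x1 y1 x2 y2 l)
  have "descent_sign_x r x1 * descent_sign_x r x2 * descent_sign_x r (l^2 - x1 - x2) = 1"
    by (rule descent_sign_x_line[OF chord_slope_line_meets[OF chord(3,5)]])
  then have "descent_sign_x r (l^2 - x1 - x2) = descent_sign_x r x1 * descent_sign_x r x2"
    using descent_sign_x_square[of "l^2 - x1 - x2"] descent_sign_x_cases[of "l^2 - x1 - x2"] by auto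
  then show ?thesis using chord by (simp add: chord_sum_def)
qed auto

end

definition euler_sign :: "int \<Rightarrow> int \<Rightarrow> int" where
  "euler_sign p n = (if mod_exp (n mod p) (nat ((p - 1) div 2)) p = 1 then 1 else -1)"

lemma Legendre_eq_euler_sign:
  assumes prime_p: "prime p" and p_gt_2: "2 < p" and nd: "\<not> int p dvd n"
  shows "Legendre n (int p) = euler_sign (int p) n"
proof -
  have e: "[Legendre n (int p) = (n mod int p) ^ ((p - 1) div 2)] (mod int p)"
  proof -
    have "Legendre n (int p) = Legendre (n mod int p) (int p)" by (rule Legendre_cong) (simp add: cong_def)
    then show ?thesis using euler_criterion[OF prime_p p_gt_2, of "n mod int p"] by simp
  qed
  have "Legendre n (int p) = 1 \<or> Legendre n (int p) = -1" using nd by (auto simp: Legendre_def cong_0_iff)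
  moreover have "(1::int) mod int p = 1" and "(-1::int) mod int p = int p - 1"
    using p_gt_2 by (simp_all add: zmod_zminus1_eq_if)
  moreover have "nat ((int p - 1) div 2) = (p - 1) div 2" using p_gt_2 by (simp add: nat_div_distrib)
  ultimately show ?thesis using e p_gt_2 by (auto simp: euler_sign_def cong_def mod_exp_def)
qed

text \<open>The evaluation rules of \<open>Mod_Exp\<close> miss the base \<open>1 :: int\<close>.\<close>
lemma mod_exp_one_int [simp]: "mod_exp (1::int) e m = 1 mod m"
  by (simp add: mod_exp_def)

definition descent_sign_frac :: "nat \<Rightarrow> int \<Rightarrow> int \<Rightarrow> int \<Rightarrow> int" where
  "descent_sign_frac p r a d =
     (if int p dvd d then 1
      else if int p dvd (a - r*d) then euler_sign (int p) (3*r^2) else euler_sign (int p) ((a - r*d)*d))"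

context prime_gt_3
begin

lemma res_legendre_of_int: "res_legendre (of_int t) = Legendre t (int p)"
  using res_legendre_eq[of "of_int t" t] by simp

lemma descent_sign_x_frac:
  assumes "d \<noteq> 0" and "\<not> (int p dvd a \<and> int p dvd d)" and "\<not> int p dvd r"
  shows "descent_sign_x r (of_int a / of_int d) = descent_sign_frac p r a d"
proof (cases "int p dvd d")
  case True
  then show ?thesis
    using not_p_integral_frac[OF True _ assms(1)] assms(2) by (simp add: descent_sign_x_def descent_sign_frac_def)
next
  case nd: False
  have shift: "of_int a / of_int d - of_int r = (of_int (a - r*d) / of_int d :: rat)"
    using assms(1) by (simp add: field_simps)
  have "\<not> int p dvd 3 * r^2" and "\<not> int p dvd a - r*d \<Longrightarrow> \<not> int p dvd (a - r*d) * d"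
    using not_dvd_three_square[OF assms(3)] nd p_dvd_mult by blast+
  moreover have "3 * of_int r ^ 2 = (of_int (3*r^2) :: rat)" by simp
  ultimately show ?thesis using nd p_integral_frac[OF nd]
    unfolding descent_sign_x_def descent_sign_frac_def shift
    by (simp only: p_divisible_frac[OF nd] res_legendre_frac[OF nd] res_legendre_of_int)
      (simp add: Legendre_eq_euler_sign[OF prime_p p_gt_2])
qed

lemma descent_sign_x_numeral:
  assumes "\<not> int p dvd r"
  shows "descent_sign_x r (numeral a) = descent_sign_frac p r (numeral a) 1"
    and "descent_sign_x r (- numeral a) = descent_sign_frac p r (- numeral a) 1"
    and "\<not> (int p dvd numeral a \<and> int p dvd numeral d) \<Longrightarrow>
      descent_sign_x r (numeral a / numeral d) = descent_sign_frac p r (numeral a) (numeral d)"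
  using descent_sign_x_frac[of 1 "numeral a" r] descent_sign_x_frac[of 1 "- numeral a" r]
    descent_sign_x_frac[of "numeral d" "numeral a" r] p_not_dvd_1 assms by simp_all

end

lemma root_mod_primeI:
  assumes "prime_gt_3 p" "c \<noteq> 0" "int p dvd r^3 + c" "\<not> int p dvd r"
  shows "root_mod_prime p (of_int c) r"
proof -
  interpret prime_gt_3 p by fact
  show ?thesis
  proof (unfold_locales)
    show "p_integral (of_int c)" "of_int c \<noteq> (0::rat)" using assms by simp_all
    show "p_divisible (of_int r ^ 3 + of_int c)"
      using assms(3) p_divisible_of_int[of "r^3 + c"] by simp
  qed fact
qed

lemma no_2_torsion:
  assumes "on_curve 0 b Q" and "ec_add 0 b Q Q = Inf" and "\<forall>x::rat. x^3 + b \<noteq> 0"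
  shows "Q = Inf"
proof (cases Q)
  case (Aff x y)
  then have "y = 0" using assms(2) by (auto simp: Let_def split: if_splits)
  then show ?thesis using assms(1,3) Aff by simp
qed

lemma no_rational_cube_root:
  fixes p m :: int
  assumes prime_p: "prime p" and nd: "\<not> p dvd m"
  shows "x^3 + of_int (p^2 * m) \<noteq> (0::rat)"
proof
  assume h: "x^3 + of_int (p^2 * m) = 0"
  obtain a d where qd: "quotient_of x = (a, d)" by (cases "quotient_of x") auto
  have x: "x = of_int a / of_int d" using quotient_of_div[OF qd] .
  have dpos: "d > 0" using quotient_of_denom_pos[OF qd] .
  have cop: "coprime a d" using quotient_of_coprime[OF qd] .
  have "of_int a ^ 3 = - of_int (p^2 * m) * (of_int d ^ 3 :: rat)"
    using h x dpos by (simp add: power_divide field_simps eq_neg_iff_add_eq_0)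
  then have "of_int (a^3) = (of_int (- (p^2 * m) * d^3) :: rat)" by simp
  then have e: "a^3 = - (p^2 * m) * d^3" by (simp only: of_int_eq_iff)
  have "p dvd a^3" unfolding e by (simp add: power2_eq_square)
  then have pa: "p dvd a" using prime_p prime_dvd_power by blast
  then obtain a1 where a1: "a = p * a1" by (auto simp: dvd_def)
  have "p^2 * (p * a1^3) = p^2 * (- m * d^3)" using e a1 by (simp add: algebra_simps power3_eq_cube power2_eq_square)
  moreover have "p^2 \<noteq> 0" using prime_p by (simp add: prime_gt_0_int)
  ultimately have "p * a1^3 = - m * d^3" using mult_left_cancel by blast
  then have "p dvd m * d^3" by (metis dvd_minus_iff dvd_triv_left mult_minus_left)
  then have "p dvd d" using nd prime_p prime_dvd_mult_iff prime_dvd_power by blast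
  then have "p dvd gcd a d" using pa by simp
  then show False using cop prime_gt_1_int[OF prime_p] by simp
qed

lemma prod_sign_powers:
  assumes "\<forall>k\<in>K. v k = 1 \<or> v k = (-1::int)"
  shows "(\<Prod>k\<in>K. v k ^ e k) = (-1) ^ (\<Sum>k\<in>K. of_bool (v k = -1) * e k)"
  unfolding power_sum using assms by (intro prod.cong) auto

lemma descent_sign_parity:
  assumes "root_mod_prime p b r" and "\<forall>P\<in>set Ps. on_curve 0 b P"
    and "length ns = length Ps" and "ec_lincomb b ns Ps = Inf"
  shows "even (\<Sum>k<length Ps. of_bool (descent_sign p r (Ps!k) = -1) * ns!k)"
proof -
  interpret root_mod_prime p b r by fact
  let ?n = "length Ps"
  have "(\<Prod>k<?n. descent_sign p r (Ps!k) ^ nat \<bar>ns!k\<bar>) = 1"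
    using character_ec_lincomb[OF descent_sign_ec_add descent_sign_Inf descent_sign_ec_neg b_nz assms(3,2)] assms(4)
    by simp
  moreover have "(\<Prod>k<?n. descent_sign p r (Ps!k) ^ nat \<bar>ns!k\<bar>)
      = (-1) ^ (\<Sum>k<?n. of_bool (descent_sign p r (Ps!k) = -1) * nat \<bar>ns!k\<bar>)"
    by (rule prod_sign_powers) (auto simp: descent_sign_def descent_sign_x_cases split: ec_pt.splits)
  ultimately have "even (\<Sum>k<?n. of_bool (descent_sign p r (Ps!k) = -1) * nat \<bar>ns!k\<bar>)"
    by (simp add: minus_one_power_iff split: if_splits)
  then have "even (\<Sum>k<?n. of_bool (descent_sign p r (Ps!k) = -1) * \<bar>ns!k\<bar> :: int)"
    unfolding even_of_nat[symmetric, where 'a = int] by (simp add: of_nat_sum)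
  moreover have "[(\<Sum>k<?n. of_bool (descent_sign p r (Ps!k) = -1) * \<bar>ns!k\<bar>)
      = (\<Sum>k<?n. of_bool (descent_sign p r (Ps!k) = -1) * ns!k)] (mod 2)"
    by (intro cong_sum cong_mult) (auto simp: cong_iff_dvd_diff abs_if)
  ultimately show ?thesis by (simp add: cong_dvd_iff)
qed

lemma ec_lincomb_halve:
  assumes "b \<noteq> 0" and "\<forall>x::rat. x^3 + b \<noteq> 0" and "\<forall>P\<in>set Ps. on_curve 0 b P"
    and "ec_lincomb b (map ((*) 2) ms) Ps = Inf"
  shows "ec_lincomb b ms Ps = Inf"
  using no_2_torsion[OF on_curve_ec_lincomb[OF assms(3,1)] _ assms(2)] assms ec_lincomb_double[OF assms(3,1)]
  by (simp add: comp_def)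

text \<open>Infinite descent: a relation with all coefficients even can be halved, since there is no
  rational 2-torsion, and this decreases the sum of the absolute values of the coefficients.\<close>
lemma ec_lin_indep_by_parity:
  assumes b_nz: "b \<noteq> 0" and nc: "\<forall>x::rat. x^3 + b \<noteq> 0" and oc: "\<forall>P\<in>set Ps. on_curve 0 b P"
    and even_rel: "\<And>ns. length ns = length Ps \<Longrightarrow> ec_lincomb b ns Ps = Inf \<Longrightarrow> \<forall>n\<in>set ns. even n"
  shows "ec_lin_indep 0 b Ps"
  unfolding ec_lin_indep_def ec_lincomb_def[symmetric]
proof (intro allI impI)
  fix ns assume "length ns = length Ps" and "ec_lincomb b ns Ps = Inf"
  then show "\<forall>n\<in>set ns. n = 0"
  proof (induction "\<Sum>n\<leftarrow>ns. nat \<bar>n\<bar>" arbitrary: ns rule: less_induct)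
    case less
    define ms where "ms = map (\<lambda>n. n div 2) ns"
    have ns: "ns = map ((*) 2) ms"
      using even_rel[OF less.prems] unfolding ms_def by (induction ns) auto
    have size: "(\<Sum>n\<leftarrow>ns. nat \<bar>n\<bar>) = 2 * (\<Sum>m\<leftarrow>ms. nat \<bar>m\<bar>)"
      unfolding ns by (induction ms) (simp_all add: abs_mult nat_mult_distrib)
    have "length ms = length Ps" and "ec_lincomb b ms Ps = Inf"
      using less.prems ec_lincomb_halve[OF b_nz nc oc] by (simp_all add: ns)
    show ?case
    proof (rule ccontr)
      assume "\<not> (\<forall>n\<in>set ns. n = 0)"
      then obtain m where m: "m \<in> set ms" "m \<noteq> 0" by (auto simp: ns)
      then have "nat \<bar>m\<bar> \<le> (\<Sum>m\<leftarrow>ms. nat \<bar>m\<bar>)" by (intro member_le_sum_list) auto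
      then have "(\<Sum>m\<leftarrow>ms. nat \<bar>m\<bar>) < (\<Sum>n\<leftarrow>ns. nat \<bar>n\<bar>)" using m(2) size by linarith
      then have "\<forall>m\<in>set ms. m = 0"
        by (rule less.hyps) fact+
      then show False using \<open>\<not> (\<forall>n\<in>set ns. n = 0)\<close> by (simp add: ns)
    qed
  qed
qed

lemma even_by_parity_left_inverse:
  fixes M :: "nat \<Rightarrow> nat \<Rightarrow> int" and c v :: "nat \<Rightarrow> int"
  assumes "finite J" and rows: "\<And>j. j \<in> J \<Longrightarrow> even (\<Sum>k<n. M j k * v k)"
    and inverse: "\<And>k. k < n \<Longrightarrow> [(\<Sum>j\<in>J. c j * M j k) = of_bool (i = k)] (mod 2)"
    and "i < n"
  shows "even (v i)"
proof -
  have "(\<Sum>k<n. (\<Sum>j\<in>J. c j * M j k) * v k) = (\<Sum>k<n. \<Sum>j\<in>J. c j * M j k * v k)"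
    by (simp add: sum_distrib_right)
  also have "\<dots> = (\<Sum>j\<in>J. \<Sum>k<n. c j * M j k * v k)"
    by (rule sum.swap)
  also have "\<dots> = (\<Sum>j\<in>J. c j * (\<Sum>k<n. M j k * v k))"
    by (simp add: sum_distrib_left mult.assoc)
  finally have "even (\<Sum>k<n. (\<Sum>j\<in>J. c j * M j k) * v k)" using rows by (simp add: dvd_sum)
  moreover have "[(\<Sum>k<n. (\<Sum>j\<in>J. c j * M j k) * v k) = (\<Sum>k<n. of_bool (i = k) * v k)] (mod 2)"
    using inverse by (intro cong_sum cong_mult) auto
  ultimately show ?thesis using \<open>i < n\<close> by (simp add: cong_dvd_iff if_distrib)
qed

definition descent_signature :: "(nat \<times> int) list \<Rightarrow> ec_pt \<Rightarrow> int list" where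
  "descent_signature chars P = map (\<lambda>(p, r). descent_sign p r P) chars"

definition sign_parity :: "int list \<Rightarrow> int list \<Rightarrow> int" where
  "sign_parity c sig = (\<Sum>(x, s)\<leftarrow>zip c sig. x * of_bool (s = -1)) mod 2"

text \<open>A signature lists the values of the characters at one point; \<open>C\<close> must be a left inverse,
  modulo 2, of the matrix whose \<open>(j, k)\<close> entry is 1 iff character \<open>j\<close> is \<open>-1\<close> at point \<open>k\<close>.\<close>
definition parity_left_inverse :: "int list list \<Rightarrow> int list list \<Rightarrow> bool" where
  "parity_left_inverse C sigs \<longleftrightarrow>
     map (\<lambda>c. map (sign_parity c) sigs) C = map (\<lambda>i. map (\<lambda>k. of_bool (i = k)) [0..<length sigs]) [0..<length sigs]"

lemma descent_signature_Aff:
  "descent_signature chars (Aff x y) = map (\<lambda>(p, r). prime_gt_3.descent_sign_x p r x) chars"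
  by (simp add: descent_signature_def case_prod_beta)

lemma length_descent_signature[simp]: "length (descent_signature chars P) = length chars"
  by (simp add: descent_signature_def)

lemma sign_parity_eq:
  "sign_parity c sig = (\<Sum>j<min (length c) (length sig). c!j * of_bool (sig!j = -1)) mod 2"
  by (simp add: sign_parity_def sum_list_sum_nth atLeast0LessThan)

lemma ec_lin_indep_by_descent_signs:
  assumes b_nz: "b \<noteq> 0" and nc: "\<forall>x::rat. x^3 + b \<noteq> 0" and oc: "\<forall>P\<in>set Ps. on_curve 0 b P"
    and chars: "\<forall>(p, r)\<in>set chars. root_mod_prime p b r"
    and inv: "parity_left_inverse C (map (descent_signature chars) Ps)"
  shows "ec_lin_indep 0 b Ps"
proof (rule ec_lin_indep_by_parity[OF b_nz nc oc])
  fix ns assume len: "length ns = length Ps" and rel: "ec_lincomb b ns Ps = Inf"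
  define M :: "nat \<Rightarrow> nat \<Rightarrow> int" where "M j k = of_bool (descent_signature chars (Ps!k) ! j = -1)" for j k
  have rows: "even (\<Sum>k<length Ps. M j k * ns!k)" if "j < length chars" for j
  proof -
    obtain p r where pr: "chars!j = (p, r)" by fastforce
    then have "root_mod_prime p b r" using chars nth_mem[OF that] by fastforce
    moreover have "descent_signature chars (Ps!k) ! j = descent_sign p r (Ps!k)" for k
      using pr that by (simp add: descent_signature_def)
    ultimately show ?thesis using descent_sign_parity[OF _ oc len rel] by (simp add: M_def)
  qed
  have inv_entries: "sign_parity (C!i) (descent_signature chars (Ps!k)) = of_bool (i = k)"
    if "i < length Ps" "k < length Ps" for i k
  proof -
    have "length C = length Ps"
      using arg_cong[OF inv[unfolded parity_left_inverse_def], of length] by simp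
    then show ?thesis
      using arg_cong[OF inv[unfolded parity_left_inverse_def], of "\<lambda>X. X!i!k"] that by simp
  qed
  have "even (ns!i)" if "i < length Ps" for i
  proof (rule even_by_parity_left_inverse[where J = "{..<min (length (C!i)) (length chars)}"
        and n = "length Ps" and M = M and v = "\<lambda>k. ns!k" and c = "\<lambda>j. C!i!j"])
    fix k assume "k < length Ps"
    then have "sign_parity (C!i) (descent_signature chars (Ps!k)) = of_bool (i = k)"
      using inv_entries that by blast
    then show "[(\<Sum>j\<in>{..<min (length (C!i)) (length chars)}. C!i!j * M j k) = of_bool (i = k)] (mod 2)"
      unfolding cong_def M_def by (simp add: sign_parity_eq)
  next
    fix j assume "j \<in> {..<min (length (C!i)) (length chars)}"
    then show "even (\<Sum>k<length Ps. M j k * ns!k)" by (intro rows) simp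
  qed (simp_all add: that)
  then show "\<forall>n\<in>set ns. even n" using len by (metis in_set_conv_nth)
qed

lemma prime_gt_3_small:
  "prime_gt_3 11" "prime_gt_3 17" "prime_gt_3 29" "prime_gt_3 41" "prime_gt_3 47"
  "prime_gt_3 53" "prime_gt_3 59" "prime_gt_3 67" "prime_gt_3 71"
  by (simp_all add: prime_gt_3_def prime_nat_iff' atLeastLessThan_upt upt_rec)

lemmas descent_sign_eval =
  prime_gt_3.descent_sign_x_numeral prime_gt_3_small descent_sign_frac_def euler_sign_def

definition E'_points :: "ec_pt list" where
  "E'_points =
     [Aff (-135797482140) 46781315964225555,
      Aff (-150436201545) 35891470127810220,
      Aff (-42200591214) 67952721291406041,
      Aff 2327642247924 3551854243978575507,
      Aff 5504535148140 12914782107290941395,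
      Aff 140506152430 86409469562070095,
      Aff 397507563420 259814927561209005,
      Aff 7162660587075 19169656506442936830,
      Aff 73148794740 71303068454026605,
      Aff (-102758626586) 60063833881519937]"

definition E'_chars :: "(nat \<times> int) list" where
  "E'_chars = [(11, 8), (17, 9), (29, 7), (41, 33), (47, 15), (53, 38), (59, 32), (67, 27), (67, 46), (71, 69)]"

lemma E'_points_on_curve: "\<forall>P\<in>set E'_points. on_curve 0 4692726937524378378756566939402025 P"
  by (simp add: E'_points_def on_curve_def)

lemma E'_descent_signatures:
  "map (descent_signature E'_chars) E'_points =
     [[-1, 1, 1, -1, 1, 1, -1, 1, -1, 1], [1, -1, -1, 1, 1, 1, -1, -1, 1, -1],
      [-1, -1, -1, -1, -1, 1, 1, 1, 1, -1], [-1, -1, 1, -1, 1, -1, 1, 1, 1, 1],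
      [1, -1, 1, 1, 1, -1, -1, -1, 1, 1], [1, 1, -1, 1, 1, -1, -1, 1, -1, 1],
      [1, -1, -1, -1, 1, 1, 1, 1, -1, -1], [-1, 1, 1, -1, -1, -1, -1, 1, 1, -1],
      [-1, -1, 1, -1, 1, -1, -1, -1, 1, 1], [1, -1, -1, -1, 1, -1, -1, -1, -1, 1]]"
  by (simp only: E'_points_def E'_chars_def list.map descent_signature_Aff) (simp add: descent_sign_eval)

lemma E'_points_lin_indep: "ec_lin_indep 0 4692726937524378378756566939402025 E'_points"
proof (rule ec_lin_indep_by_descent_signs[OF _ _ E'_points_on_curve])
  show "\<forall>x::rat. x^3 + 4692726937524378378756566939402025 \<noteq> 0"
    using no_rational_cube_root[of 5 187709077500975135150262677576081] by simp
  show "\<forall>(p, r)\<in>set E'_chars. root_mod_prime p 4692726937524378378756566939402025 r"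
    using root_mod_primeI[where c = 4692726937524378378756566939402025] by (simp add: E'_chars_def prime_gt_3_small)
  show "parity_left_inverse
     [[1, 1, 0, 1, 0, 1, 0, 0, 1, 1], [0, 1, 1, 0, 1, 1, 1, 1, 1, 1], [1, 0, 0, 1, 1, 0, 1, 1, 1, 0],
      [1, 0, 1, 1, 1, 1, 0, 1, 0, 0], [0, 1, 1, 1, 1, 0, 0, 0, 1, 0], [0, 1, 0, 0, 0, 1, 0, 0, 0, 1],
      [0, 1, 1, 0, 0, 1, 1, 1, 1, 0], [1, 0, 0, 1, 0, 0, 1, 1, 1, 0], [1, 1, 1, 0, 0, 0, 0, 1, 1, 1],
      [1, 1, 1, 1, 0, 1, 1, 1, 1, 0]]
     (map (descent_signature E'_chars) E'_points)"
    unfolding E'_descent_signatures by (simp add: parity_left_inverse_def sign_parity_def upt_rec)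
qed simp

text \<open>The images of \<open>E'_points\<close> under the 3-isogeny
  \<open>(x, y) \<mapsto> (4 (x\<^sup>3 + 4 c) / x\<^sup>2, 8 y (x\<^sup>3 - 8 c) / x\<^sup>3)\<close>
  from \<open>y\<^sup>2 = x\<^sup>3 + c\<close>, \<open>c = (k/2)\<^sup>2\<close>, onto \<open>y\<^sup>2 = x\<^sup>3 - 432 k\<^sup>2\<close>.\<close>
definition E_points :: "ec_pt list" where
  "E_points =
     [Aff 3528379374409 5984763094833906277,
      Aff (24443832958924/9) (93240170853556763168/27),
      Aff 41991934832044 272097810161011577728,
      Aff (83919846442489/9) (764916625222063960787/27),
      Aff (198185567469961/9) (2788965029861620279109/27),
      Aff (1261563628223644/289) (- 42568769904444402678928/4913),
      Aff (249889953577441/121) (1112982603584253549839/1331),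
      Aff (35098829679837436/1225) (6574520442643878447103184/42875),
      Aff (10442897018676361/729) (- 1065691846252244332562491/19683),
      Aff (21538219648328006044/3214849) (98600392432667169709151373872/5764224257)]"

definition E_chars :: "(nat \<times> int) list" where
  "E_chars = [(11, 3), (17, 11), (29, 3), (41, 14), (47, 8), (53, 21), (59, 29), (67, 5), (67, 11), (71, 24)]"

lemma E_points_on_curve: "\<forall>P\<in>set E_points. on_curve 0 (-8109032148042125838491347671286699200) P"
  by (simp add: E_points_def on_curve_def power_divide)

lemma E_descent_signatures:
  "map (descent_signature E_chars) E_points =
     [[-1, 1, 1, -1, 1, 1, -1, -1, 1, 1], [1, -1, -1, 1, 1, 1, -1, -1, -1, -1],
      [-1, -1, -1, -1, -1, 1, 1, 1, 1, -1], [-1, -1, 1, -1, 1, -1, 1, 1, 1, 1],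
      [1, -1, 1, 1, 1, -1, -1, -1, -1, 1], [1, 1, -1, 1, 1, -1, -1, -1, 1, 1],
      [1, -1, -1, -1, 1, 1, 1, -1, 1, -1], [-1, 1, 1, -1, -1, -1, -1, 1, 1, -1],
      [-1, -1, 1, -1, 1, -1, -1, -1, -1, 1], [1, -1, -1, -1, 1, -1, -1, 1, -1, 1]]"
  by (simp only: E_points_def E_chars_def list.map descent_signature_Aff) (simp add: descent_sign_eval)

lemma E_points_lin_indep: "ec_lin_indep 0 (-8109032148042125838491347671286699200) E_points"
proof (rule ec_lin_indep_by_descent_signs[OF _ _ E_points_on_curve])
  show "\<forall>x::rat. x^3 + -8109032148042125838491347671286699200 \<noteq> 0"
    using no_rational_cube_root[of 5 "-324361285921685033539653906851467968"] by simp
  show "\<forall>(p, r)\<in>set E_chars. root_mod_prime p (-8109032148042125838491347671286699200) r"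
    using root_mod_primeI[where c = "-8109032148042125838491347671286699200"]
    by (simp add: E_chars_def prime_gt_3_small)
  show "parity_left_inverse
     [[1, 1, 0, 1, 0, 1, 0, 1, 1, 1], [0, 1, 1, 0, 1, 1, 1, 1, 0, 1], [1, 0, 0, 1, 1, 0, 1, 1, 0, 0],
      [1, 0, 1, 1, 1, 1, 0, 0, 1, 0], [0, 1, 1, 1, 1, 0, 0, 1, 1, 0], [0, 1, 0, 0, 0, 1, 0, 0, 0, 1],
      [0, 1, 1, 0, 0, 1, 1, 1, 0, 0], [1, 0, 0, 1, 0, 0, 1, 1, 0, 0], [1, 1, 1, 0, 0, 0, 0, 1, 0, 1],
      [1, 1, 1, 1, 0, 1, 1, 1, 0, 0]]
     (map (descent_signature E_chars) E_points)"
    unfolding E_descent_signatures by (simp add: parity_left_inverse_def sign_parity_def upt_rec)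
qed simp

theorem mainTheorem3:
  fixes k :: int and c :: rat and Ps :: "ec_pt list"
  assumes "k = 137006962414679910"
    and "c = 4692726937524378378756566939402025"
    and "Ps = [Aff (-135797482140) 46781315964225555,
               Aff (-150436201545) 35891470127810220,
               Aff (-42200591214) 67952721291406041,
               Aff 2327642247924 3551854243978575507,
               Aff 5504535148140 12914782107290941395,
               Aff 140506152430 86409469562070095,
               Aff 397507563420 259814927561209005,
               Aff 7162660587075 19169656506442936830,
               Aff 73148794740 71303068454026605,
               Aff (-102758626586) 60063833881519937]"
  shows "k = 2 * 3 * 5 * 7 * 23 * 31 * 37 * 43 * 83 * 109 * 151 * 421
         \<and> (\<forall>P \<in> set Ps. on_curve 0 c P)
         \<and> ec_lin_indep 0 c Ps
         \<and> Ek_rank_ge k 10"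
proof -
  have Ps: "Ps = E'_points" using assms(3) by (simp add: E'_points_def)
  have "ec_rank_ge 0 (-8109032148042125838491347671286699200) 10"
    unfolding ec_rank_ge_def using E_points_on_curve E_points_lin_indep
    by (intro exI[of _ E_points]) (simp add: E_points_def)
  moreover have "- 432 * (of_int k)^2 = (-8109032148042125838491347671286699200 :: rat)"
    using assms(1) by simp
  ultimately have "Ek_rank_ge k 10" by (simp add: Ek_rank_ge_def)
  then show ?thesis using assms(1,2) Ps E'_points_on_curve E'_points_lin_indep by simp
qed

end
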